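(* Let $\mathcal{A}$ be a Desargues affine plane, let $\ell_1=\ell^{OI}$ and $\ell_2$ be lines of $\mathcal{A}$ ($O\neq I$), and let $P_P:\ell_1\to\ell_2$ be a parallel projection. Equip $\ell_1$ with the skew field structure with zero $O$ and unit $I$, and $\ell_2$ with the skew field structure with zero $P_P(O)$ and unit $P_P(I)$. Then for all $A,B,C\in\ell_1$ with $B\neq C$, \[ P_P(r(A,B;C))=r(P_P(A),P_P(B);P_P(C)), \] where the ratio on the left is computed in $\ell_1$ and the ratio on the right in $\ell_2$.
   Context: A Desargues affine plane is an incidence structure of points and lines in which any two distinct points lie on exactly one line, through a point not on a line $\ell$ there is exactly one line disjoint from $\ell$ (Playfair), there exist three non-collinear points, and Desargues' axiom holds: if $A,B,C,A',B',C'$ are points such that the pairwise distinct lines $AA',BB',CC'$ are either all parallel or all pass through one point, and $AB\parallel A'B'$, $BC\parallel B'C'$ (with $AB\neq A'B'$, $BC\neq B'C'$, $A\ne C$, $A'\ne C'$), then $AC\parallel A'C'$. Skew field on a line: for distinct points $O,I$ and points $A,B$ on the line $\ell^{OI}$, addition is defined by: choose a point $B_1\notin\ell^{OI}$; let $P_1$ be the intersection of the line through $B_1$ parallel to $\ell^{OI}$ with the line through $A$ parallel to $OB_1$; then $A+B$ is the intersection of $\ell^{OI}$ with the line through $P_1$ parallel to $BB_1$. Multiplication is defined by: choose $B_1\notin\ell^{OI}$; let $P_1$ be the intersection of the line through $A$ parallel to $IB_1$ with the line $OB_1$; then $A\cdot B$ is the intersection of $\ell^{OI}$ with the line through $P_1$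 parallel to $BB_1$. These operations do not depend on the choice of $B_1$ and make $(\ell^{OI},+,\cdot)$ a skew field with zero $O$ and unit $I$; the same construction applies to any line with any chosen pair of distinct points as zero and unit. $-X$ and $X^{-1}$ denote additive and multiplicative inverses, $X-Y=X+(-Y)$. Ratio of three points on such a line: $r(A,B;C)=(B-C)^{-1}(A-C)$ for $B\neq C$. A parallel projection between lines $\ell_1,\ell_2$ is a map $P_P:\ell_1\to\ell_2$ such that for all $A,B\in\ell_1$ the lines $A\,P_P(A)$ and $B\,P_P(B)$ are parallel (it is a bijection). *)

theory Defs
  imports Main
begin

definition line_of :: "'p set set \<Rightarrow> 'p \<Rightarrow> 'p \<Rightarrow> 'p set" where
  "line_of L A B = (THE l. l \<in> L \<and> A \<in> l \<and> B \<in> l)"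

definition par :: "'p set set \<Rightarrow> 'p set \<Rightarrow> 'p set \<Rightarrow> bool" where
  "par L l m \<longleftrightarrow> l \<in> L \<and> m \<in> L \<and> (l = m \<or> l \<inter> m = {})"

definition par_line :: "'p set set \<Rightarrow> 'p \<Rightarrow> 'p set \<Rightarrow> 'p set" where
  "par_line L P l = (THE m. m \<in> L \<and> P \<in> m \<and> par L m l)"

definition meet :: "'p set \<Rightarrow> 'p set \<Rightarrow> 'p" where
  "meet l m = (THE X. X \<in> l \<and> X \<in> m)"

definition affine_plane :: "'p set set \<Rightarrow> bool" where
  "affine_plane L \<longleftrightarrow>
     (\<forall>A B. A \<noteq> B \<longrightarrow> (\<exists>!l. l \<in> L \<and> A \<in> l \<and> B \<in> l)) \<and>
     (\<forall>l P. l \<in> L \<and> P \<notin> l \<longrightarrow> (\<exists>!m. m \<in> L \<and> P \<in> m \<and> l \<inter> m = {})) \<and>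
     (\<exists>A B C. \<not> (\<exists>l\<in>L. A \<in> l \<and> B \<in> l \<and> C \<in> l))"

definition desargues :: "'p set set \<Rightarrow> bool" where
  "desargues L \<longleftrightarrow>
     (\<forall>A B C A' B' C'.
        A \<noteq> A' \<and> B \<noteq> B' \<and> C \<noteq> C' \<and> A \<noteq> B \<and> B \<noteq> C \<and> A \<noteq> C \<and>
        A' \<noteq> B' \<and> B' \<noteq> C' \<and> A' \<noteq> C' \<and>
        line_of L A A' \<noteq> line_of L B B' \<and> line_of L B B' \<noteq> line_of L C C' \<and>
        line_of L A A' \<noteq> line_of L C C' \<and>
        ((par L (line_of L A A') (line_of L B B') \<and> par L (line_of L B B') (line_of L C C')) \<or>
         (\<exists>P. P \<in> line_of L A A' \<and> P \<in> line_of L B B' \<and> P \<in> line_of L C C')) \<and>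
        par L (line_of L A B) (line_of L A' B') \<and> line_of L A B \<noteq> line_of L A' B' \<and>
        par L (line_of L B C) (line_of L B' C') \<and> line_of L B C \<noteq> line_of L B' C'
        \<longrightarrow> par L (line_of L A C) (line_of L A' C'))"

definition desargues_affine_plane :: "'p set set \<Rightarrow> bool" where
  "desargues_affine_plane L \<longleftrightarrow> affine_plane L \<and> desargues L"

text \<open>Skew field operations on the line OI (zero O, unit I), with an
  auxiliary point B1 off the line (the result does not depend on the choice).\<close>

definition sf_add :: "'p set set \<Rightarrow> 'p \<Rightarrow> 'p \<Rightarrow> 'p \<Rightarrow> 'p \<Rightarrow> 'p" where
  "sf_add L Z U A B =
    (let l = line_of L Z U;
         B1 = (SOME X. X \<notin> l);
         P1 = meet (par_line L B1 l) (par_line L A (line_of L Z B1))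
     in meet l (par_line L P1 (line_of L B B1)))"

definition sf_mul :: "'p set set \<Rightarrow> 'p \<Rightarrow> 'p \<Rightarrow> 'p \<Rightarrow> 'p \<Rightarrow> 'p" where
  "sf_mul L Z U A B =
    (let l = line_of L Z U;
         B1 = (SOME X. X \<notin> l);
         P1 = meet (par_line L A (line_of L U B1)) (line_of L Z B1)
     in meet l (par_line L P1 (line_of L B B1)))"

definition sf_neg :: "'p set set \<Rightarrow> 'p \<Rightarrow> 'p \<Rightarrow> 'p \<Rightarrow> 'p" where
  "sf_neg L Z U X = (THE Y. Y \<in> line_of L Z U \<and> sf_add L Z U X Y = Z)"

definition sf_inv :: "'p set set \<Rightarrow> 'p \<Rightarrow> 'p \<Rightarrow> 'p \<Rightarrow> 'p" where
  "sf_inv L Z U X = (THE Y. Y \<in> line_of L Z U \<and> sf_mul L Z U X Y = U)"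

definition sf_sub :: "'p set set \<Rightarrow> 'p \<Rightarrow> 'p \<Rightarrow> 'p \<Rightarrow> 'p \<Rightarrow> 'p" where
  "sf_sub L Z U X Y = sf_add L Z U X (sf_neg L Z U Y)"

definition ratio :: "'p set set \<Rightarrow> 'p \<Rightarrow> 'p \<Rightarrow> 'p \<Rightarrow> 'p \<Rightarrow> 'p \<Rightarrow> 'p" where
  "ratio L Z U A B C = sf_mul L Z U (sf_inv L Z U (sf_sub L Z U B C)) (sf_sub L Z U A C)"

definition parallel_projection :: "'p set set \<Rightarrow> 'p set \<Rightarrow> 'p set \<Rightarrow> ('p \<Rightarrow> 'p) \<Rightarrow> bool" where
  "parallel_projection L l1 l2 f \<longleftrightarrow> l1 \<in> L \<and> l2 \<in> L \<and>
     (\<exists>d\<in>L. \<not> par L d l1 \<and> \<not> par L d l2 \<and>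
        (\<forall>A\<in>l1. f A \<in> l2 \<and> f A \<in> par_line L A d))"

end

theory Submission
  imports Defs
begin

text \<open>
  Unless the plane has only four points, Desargues' axiom provides Artin's translations and, for
  every point \<open>Z\<close>, the dilatations with centre \<open>Z\<close>, built by completing parallelograms and
  similar triangles. On the line \<open>Z U\<close>, \<open>A + B\<close> is the image of \<open>B\<close> under the translation
  taking \<open>Z\<close> to \<open>A\<close>, and \<open>A \<cdot> B\<close> its image under the dilatation with centre \<open>Z\<close> taking \<open>U\<close>
  to \<open>A\<close>. A parallel projection along \<open>d\<close> carries the first translation to the one taking the
  projection of \<open>Z\<close> to that of \<open>A\<close>, because the two differ by translations moving points along
  \<open>d\<close>; and conjugating by the translation from \<open>Z\<close> to its projection carries the dilatation to
  one centred at the projection of \<open>Z\<close>. So the projection is an isomorphism of skew fields and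
  preserves ratios. In the four-point plane every line has two points, and the ratio is \<open>0\<close> or
  \<open>1\<close> according as \<open>A = C\<close> or not.
\<close>

section \<open>Incidence geometry of an affine plane\<close>

locale affine_incidence =
  fixes L :: "'p set set"
  assumes affine: "affine_plane L" and nontrivial: "\<exists>A B::'p. A \<noteq> B"
begin

abbreviation line :: "'p \<Rightarrow> 'p \<Rightarrow> 'p set" where "line \<equiv> line_of L"
abbreviation parl :: "'p \<Rightarrow> 'p set \<Rightarrow> 'p set" where "parl \<equiv> par_line L"
abbreviation parallel :: "'p set \<Rightarrow> 'p set \<Rightarrow> bool" (infix "\<parallel>" 50)
  where "l \<parallel> m \<equiv> par L l m"

lemma line_ex1: "A \<noteq> B \<Longrightarrow> \<exists>!l. l \<in> L \<and> A \<in> l \<and> B \<in> l"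
  using affine unfolding affine_plane_def by simp

lemma playfair: "l \<in> L \<Longrightarrow> P \<notin> l \<Longrightarrow> \<exists>!m. m \<in> L \<and> P \<in> m \<and> l \<inter> m = {}"
  using affine unfolding affine_plane_def by simp

lemma line_props:
  assumes "A \<noteq> B" shows "line A B \<in> L" "A \<in> line A B" "B \<in> line A B"
proof -
  have "line A B \<in> L \<and> A \<in> line A B \<and> B \<in> line A B"
    unfolding line_of_def by (rule theI'[OF line_ex1[OF assms]])
  then show "line A B \<in> L" "A \<in> line A B" "B \<in> line A B" by auto
qed

lemma line_unique:
  assumes "l \<in> L" "m \<in> L" "A \<in> l" "A \<in> m" "B \<in> l" "B \<in> m" "A \<noteq> B"
  shows "l = m"
proof -
  obtain l0 where "\<forall>y. y \<in> L \<and> A \<in> y \<and> B \<in> y \<longrightarrow> y = l0"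
    using line_ex1[OF assms(7)] by auto
  then show ?thesis using assms(1-6) by metis
qed

lemma line_eq: "l \<in> L \<Longrightarrow> A \<in> l \<Longrightarrow> B \<in> l \<Longrightarrow> A \<noteq> B \<Longrightarrow> line A B = l"
  using line_unique[of l "line A B" A B] line_props[of A B] by simp

lemma line_sym: "line A B = line B A"
proof -
  have "(\<lambda>l. l \<in> L \<and> A \<in> l \<and> B \<in> l) = (\<lambda>l. l \<in> L \<and> B \<in> l \<and> A \<in> l)" by auto
  then show ?thesis unfolding line_of_def by simp
qed

lemma point_off_line: "l \<in> L \<Longrightarrow> \<exists>X. X \<notin> l"
proof -
  assume l: "l \<in> L"
  obtain A B C where "\<not> (\<exists>l\<in>L. A \<in> l \<and> B \<in> l \<and> C \<in> l)"
    using affine unfolding affine_plane_def by auto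
  then show ?thesis using l by auto
qed

lemma par_refl: "l \<in> L \<Longrightarrow> l \<parallel> l" unfolding par_def by auto
lemma par_sym: "l \<parallel> m \<Longrightarrow> m \<parallel> l" unfolding par_def by auto
lemma par_in_L: "l \<parallel> m \<Longrightarrow> l \<in> L" "l \<parallel> m \<Longrightarrow> m \<in> L" unfolding par_def by auto

lemma par_common_point: "l \<parallel> m \<Longrightarrow> P \<in> l \<Longrightarrow> P \<in> m \<Longrightarrow> l = m"
  unfolding par_def by auto

lemma par_trans:
  assumes lm: "l \<parallel> m" and mk: "m \<parallel> k" shows "l \<parallel> k"
proof (rule ccontr)
  assume "\<not> l \<parallel> k"
  then obtain P where P: "P \<in> l" "P \<in> k" and "l \<noteq> k"
    using lm mk unfolding par_def by auto
  then have "l \<inter> m = {}" "m \<inter> k = {}" using lm mk unfolding par_def by auto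
  moreover have "P \<notin> m" using \<open>l \<inter> m = {}\<close> P by auto
  ultimately show False
    using playfair[OF par_in_L(2)[OF lm]] par_in_L(1)[OF lm] par_in_L(2)[OF mk] P \<open>l \<noteq> k\<close>
    by (metis Int_commute)
qed

lemma parl_ex1: "l \<in> L \<Longrightarrow> \<exists>!m. m \<in> L \<and> P \<in> m \<and> m \<parallel> l"
proof -
  assume l: "l \<in> L"
  have "\<exists>m. m \<in> L \<and> P \<in> m \<and> m \<parallel> l"
  proof (cases "P \<in> l")
    case True then show ?thesis using l par_refl by blast
  next
    case False
    then obtain m where "m \<in> L" "P \<in> m" "l \<inter> m = {}" using playfair l by blast
    then show ?thesis using l unfolding par_def by blast
  qed
  moreover have "m = n" if "m \<in> L \<and> P \<in> m \<and> m \<parallel> l" "n \<in> L \<and> P \<in> n \<and> n \<parallel> l" for m n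
    using that par_common_point par_trans par_sym by metis
  ultimately show ?thesis by blast
qed

lemma parl_props:
  assumes "l \<in> L" shows "parl P l \<in> L" "P \<in> parl P l" "parl P l \<parallel> l"
proof -
  have "parl P l \<in> L \<and> P \<in> parl P l \<and> parl P l \<parallel> l"
    unfolding par_line_def by (rule theI'[OF parl_ex1[OF assms]])
  then show "parl P l \<in> L" "P \<in> parl P l" "parl P l \<parallel> l" by auto
qed

lemma parl_unique: "l \<in> L \<Longrightarrow> m \<in> L \<Longrightarrow> P \<in> m \<Longrightarrow> m \<parallel> l \<Longrightarrow> parl P l = m"
  using parl_ex1[of l P] parl_props[of l P] by blast

lemma parl_self: "l \<in> L \<Longrightarrow> P \<in> l \<Longrightarrow> parl P l = l"
  using parl_unique[of l l P] par_refl[of l] by simp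

lemma parl_par_cong: "l \<parallel> l' \<Longrightarrow> parl P l = parl P l'"
  using parl_unique[of l' "parl P l" P] parl_props[of l P] par_trans par_in_L by metis

lemma parl_mem_eq: "l \<in> L \<Longrightarrow> Q \<in> parl P l \<Longrightarrow> parl Q l = parl P l"
  using parl_unique[of l "parl P l" Q] parl_props[of l P] by simp

lemma parl_disjoint: "l \<in> L \<Longrightarrow> P \<notin> l \<Longrightarrow> parl P l \<inter> l = {}"
  using parl_props[of l P] unfolding par_def by auto

lemma parl_eq_line: "A \<noteq> B \<Longrightarrow> line A B \<parallel> m \<Longrightarrow> parl A m = line A B"
  using parl_unique[of m "line A B" A] line_props[of A B] par_in_L by blast

lemma par_mem_parl: "A \<noteq> B \<Longrightarrow> line P Q \<parallel> line A B \<Longrightarrow> B \<in> parl A (line P Q)"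
  using parl_eq_line[of A B "line P Q"] line_props(3)[of A B] par_sym by simp

lemma line_eq_parl:
  assumes "l \<in> L" "B \<in> parl A l" "A \<noteq> B"
  shows "line A B = parl A l" "line A B \<parallel> l"
  using line_eq[of "parl A l" A B] parl_props[OF assms(1), of A] assms by simp_all

lemma nonpar_cong: "\<not> l \<parallel> m \<Longrightarrow> l \<parallel> l' \<Longrightarrow> m \<parallel> m' \<Longrightarrow> \<not> l' \<parallel> m'"
  using par_trans par_sym by metis

lemma lines_through_nonpar:
  assumes "A \<noteq> B" "C \<notin> line A B" shows "\<not> line A B \<parallel> line A C"
proof
  assume par: "line A B \<parallel> line A C"
  have "A \<noteq> C" using assms line_props(2)[OF assms(1)] by auto
  then have "line A B = line A C"
    using par_common_point[OF par line_props(2)[OF assms(1)] line_props(2)] by simp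
  then show False using assms(2) line_props(3)[OF \<open>A \<noteq> C\<close>] by simp
qed

lemma meet_eq: "l \<in> L \<Longrightarrow> m \<in> L \<Longrightarrow> l \<noteq> m \<Longrightarrow> X \<in> l \<Longrightarrow> X \<in> m \<Longrightarrow> meet l m = X"
  unfolding meet_def using line_unique[of l m] by blast

lemma meet_eq_nonpar: "l \<in> L \<Longrightarrow> m \<in> L \<Longrightarrow> \<not> l \<parallel> m \<Longrightarrow> X \<in> l \<Longrightarrow> X \<in> m \<Longrightarrow> meet l m = X"
  using meet_eq par_refl by blast

lemma meet_props:
  assumes "l \<in> L" "m \<in> L" "\<not> l \<parallel> m" shows "meet l m \<in> l" "meet l m \<in> m"
proof -
  obtain X where "X \<in> l" "X \<in> m" using assms unfolding par_def by auto
  then show "meet l m \<in> l" "meet l m \<in> m" using meet_eq_nonpar[OF assms] by auto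
qed

lemma nonpar_common_point_unique:
  "\<not> l \<parallel> m \<Longrightarrow> l \<in> L \<Longrightarrow> m \<in> L \<Longrightarrow> X \<in> l \<Longrightarrow> X \<in> m \<Longrightarrow> Y \<in> l \<Longrightarrow> Y \<in> m \<Longrightarrow> X = Y"
  using line_unique par_refl by blast

lemma line_eq_through: "Z \<noteq> V \<Longrightarrow> Y \<in> line Z V \<Longrightarrow> Z \<noteq> Y \<Longrightarrow> line Z Y = line Z V"
  using line_eq[OF line_props(1,2)] by blast

lemma not_on_line_swap:
  assumes ZV: "Z \<noteq> V" and Y: "Y \<notin> line Z V" shows "V \<notin> line Z Y"
proof
  assume V: "V \<in> line Z Y"
  have ZY: "Z \<noteq> Y" using Y line_props(2)[OF ZV] by auto
  then show False using line_eq_through[OF ZY V ZV] line_props(3)[OF ZY] Y by simp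
qed

definition aux_point :: "'p \<Rightarrow> 'p \<Rightarrow> 'p" where "aux_point Z U = (SOME X. X \<notin> line Z U)"

lemma aux_point_off_line: "Z \<noteq> U \<Longrightarrow> aux_point Z U \<notin> line Z U"
  unfolding aux_point_def using point_off_line[OF line_props(1)] by (metis someI_ex)

end

section \<open>Planes of order two\<close>

context affine_incidence
begin

text \<open>This happens only in the affine plane of order two, which has four points.\<close>

definition two_line_cover :: bool where
  "two_line_cover \<longleftrightarrow> (\<exists>l\<in>L. \<exists>m\<in>L. l \<noteq> m \<and> (\<forall>W. W \<in> l \<or> W \<in> m))"

lemma point_off_two_lines:
  assumes "\<not> two_line_cover" "l \<in> L" "m \<in> L" obtains W where "W \<notin> l" "W \<notin> m"
  using assms point_off_line unfolding two_line_cover_def by (cases "l = m") blast+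

lemma point_off_line_and_rays:
  assumes large: "\<not> two_line_cover" and ZU: "Z \<noteq> U" and RS: "R \<noteq> Z" "S \<noteq> Z"
    and on_line: "R \<in> line Z U \<or> S \<in> line Z U"
  obtains W where "W \<notin> line Z U" "R \<notin> line Z W" "S \<notin> line Z W"
proof -
  define K where "K = (if R \<in> line Z U then S else R)"
  have ZK: "Z \<noteq> K" using RS unfolding K_def by auto
  obtain W where W: "W \<notin> line Z U" "W \<notin> line Z K"
    using point_off_two_lines[OF large line_props(1)[OF ZU] line_props(1)[OF ZK]] .
  have "W \<notin> line Z R" "W \<notin> line Z S"
    using W on_line line_eq_through[OF ZU] RS unfolding K_def by (auto split: if_splits)
  then show ?thesis using that W(1) not_on_line_swap RS by metis
qed

lemma line_two_points:
  assumes l: "l \<in> L" shows "\<exists>A B. A \<noteq> B \<and> A \<in> l \<and> B \<in> l"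
proof (rule ccontr)
  assume "\<not> ?thesis"
  then obtain p where p: "l \<subseteq> {p}" by blast
  obtain X where X: "X \<noteq> p" using nontrivial by metis
  have k: "line X p \<in> L" "X \<in> line X p" "p \<in> line X p" using line_props X by auto
  obtain Y where Y: "Y \<notin> line X p" using point_off_line k by auto
  have XY: "X \<noteq> Y" and pY: "p \<noteq> Y" using Y k by auto
  note n1 = line_props[OF XY] and lpY = line_props[OF pY]
  define n2 where "n2 = parl X (line p Y)"
  have n2: "n2 \<in> L" "X \<in> n2" "n2 \<parallel> line p Y" using parl_props lpY n2_def by auto
  have pn1: "p \<notin> line X Y" using line_unique n1 k X Y by metis
  have "X \<notin> line p Y" using line_unique lpY k X Y by metis
  then have pn2: "p \<notin> n2" using par_common_point n2 lpY by metis
  have "Y \<notin> n2" using par_common_point n2 lpY pn2 by metis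
  then have "line X Y \<noteq> n2" using n1 by auto
  moreover have "l \<inter> line X Y = {}" "l \<inter> n2 = {}" using pn1 pn2 p by auto
  moreover have "X \<notin> l" using X p by auto
  ultimately show False using playfair[OF l] n1 n2 by blast
qed

lemma two_line_cover_disjoint:
  assumes l: "l \<in> L" and m: "m \<in> L" "l \<noteq> m" and cover: "\<And>W. W \<in> l \<or> W \<in> m"
  shows "l \<inter> m = {}"
proof (rule ccontr)
  assume "l \<inter> m \<noteq> {}"
  then obtain Q where Q: "Q \<in> l" "Q \<in> m" by auto
  obtain x where x: "x \<in> l" "x \<noteq> Q" using line_two_points[OF l] by metis
  obtain y where y: "y \<in> m" "y \<noteq> Q" using line_two_points[OF m(1)] by metis
  have xm: "x \<notin> m" and yl: "y \<notin> l" using line_unique l m Q x y by metis+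
  then have xy: "x \<noteq> y" using y by auto
  note n = line_props[OF xy]
  have "Q \<notin> line x y" using line_unique n l Q x yl by metis
  then obtain k where k: "k \<in> L" "Q \<in> k" "line x y \<inter> k = {}" using playfair[OF n(1)] by blast
  obtain z where z: "z \<in> k" "z \<noteq> Q" using line_two_points[OF k(1)] by metis
  have "k = l \<or> k = m" using cover[of z] line_unique k l m Q z by metis
  then show False using k n x y by auto
qed

lemma disjoint_cover_two_points:
  assumes l: "l \<in> L" and m: "m \<in> L" and lm: "l \<inter> m = {}" and cover: "\<And>W. W \<in> l \<or> W \<in> m"
    and abc: "a \<in> l" "b \<in> l" "c \<in> l" and y: "y1 \<in> m" "y2 \<in> m" "y1 \<noteq> y2"
  shows "a = b \<or> a = c \<or> b = c"
proof (rule ccontr)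
  assume ne: "\<not> ?thesis"
  have a_y1: "a \<noteq> y1" using lm abc y by auto
  define n where "n = line y1 a"
  have n: "n \<in> L" "y1 \<in> n" "a \<in> n" using line_props a_y1 n_def by auto
  have y2n: "y2 \<notin> n" using line_unique n m y abc lm by (metis disjoint_iff)
  have disj: "line y2 z \<inter> n = {}" if z: "z \<in> l" "z \<noteq> a" for z
  proof (rule ccontr)
    assume "line y2 z \<inter> n \<noteq> {}"
    then obtain W where W: "W \<in> line y2 z" "W \<in> n" by auto
    have yz: "y2 \<noteq> z" using lm z y by auto
    note lz = line_props[OF yz]
    show False
    proof (cases "W \<in> l")
      case True
      then have "W = z" using line_unique lz l W z y lm by (metis disjoint_iff)
      then show False using line_unique n l W abc z True y lm by (metis disjoint_iff)
    next
      case False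
      then have "W = y2" using cover line_unique lz m W y z lm by (metis disjoint_iff)
      then show False using y2n W by auto
    qed
  qed
  have yb: "y2 \<noteq> b" "y2 \<noteq> c" using lm abc y by auto
  note lb = line_props[OF yb(1)] and lc = line_props[OF yb(2)]
  have "line y2 b \<noteq> line y2 c" using line_unique lb lc l abc ne y lm by (metis disjoint_iff)
  moreover have "n \<inter> line y2 b = {}" "n \<inter> line y2 c = {}" using disj abc ne by auto
  ultimately show False using playfair[OF n(1) y2n] lb lc by blast
qed

lemma two_line_cover_two_points:
  assumes cover: "two_line_cover" and k: "k \<in> L" and abc: "a \<in> k" "b \<in> k" "c \<in> k"
  shows "a = b \<or> a = c \<or> b = c"
proof (rule ccontr)
  assume ne: "\<not> ?thesis"
  obtain l m where lm: "l \<in> L" "m \<in> L" "l \<noteq> m" and cov: "\<And>W. W \<in> l \<or> W \<in> m"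
    using cover unfolding two_line_cover_def by blast
  have disj: "l \<inter> m = {}" "m \<inter> l = {}" using two_line_cover_disjoint[OF lm cov] by auto
  have "k = l \<or> k = m" using cov line_unique k lm abc ne by metis
  moreover obtain y1 y2 where "y1 \<in> m" "y2 \<in> m" "y1 \<noteq> y2" using line_two_points[OF lm(2)] by metis
  moreover obtain z1 z2 where "z1 \<in> l" "z2 \<in> l" "z1 \<noteq> z2" using line_two_points[OF lm(1)] by metis
  ultimately show False
    using disjoint_cover_two_points[OF lm(1,2) disj(1) cov] disjoint_cover_two_points[OF lm(2,1) disj(2)] cov abc ne
    by metis
qed

end

section \<open>Parallelograms in a Desarguesian plane\<close>

locale desarguesian = affine_incidence L for L :: "'p set set" +
  assumes desargues_axiom: "desargues L"
begin

lemma desargues_par: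
  assumes "A \<noteq> A'" "B \<noteq> B'" "C \<noteq> C'" "A \<noteq> B" "B \<noteq> C" "A \<noteq> C"
    "A' \<noteq> B'" "B' \<noteq> C'" "A' \<noteq> C'"
    "line A A' \<noteq> line B B'" "line B B' \<noteq> line C C'" "line A A' \<noteq> line C C'"
    "(line A A' \<parallel> line B B' \<and> line B B' \<parallel> line C C') \<or>
     (\<exists>P. P \<in> line A A' \<and> P \<in> line B B' \<and> P \<in> line C C')"
    "line A B \<parallel> line A' B'" "line A B \<noteq> line A' B'"
    "line B C \<parallel> line B' C'" "line B C \<noteq> line B' C'"
  shows "line A C \<parallel> line A' C'"
  using desargues_axiom[unfolded desargues_def, rule_format, of A A' B B' C C'] assms by blast

definition fourth_vertex :: "'p \<Rightarrow> 'p \<Rightarrow> 'p \<Rightarrow> 'p" where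
  "fourth_vertex P Q R = meet (parl R (line P Q)) (parl Q (line P R))"

lemma fourth_vertex_lines_nonpar:
  assumes PQ: "P \<noteq> Q" and R: "R \<notin> line P Q"
  shows "\<not> parl R (line P Q) \<parallel> parl Q (line P R)"
proof -
  have "P \<noteq> R" using R line_props PQ by auto
  then show ?thesis
    using nonpar_cong[OF lines_through_nonpar[OF PQ R]] parl_props line_props PQ par_sym by metis
qed

lemma fourth_vertex_props:
  assumes PQ: "P \<noteq> Q" and R: "R \<notin> line P Q"
  shows "fourth_vertex P Q R \<in> parl R (line P Q)" "fourth_vertex P Q R \<in> parl Q (line P R)"
    "fourth_vertex P Q R \<notin> line P Q" "fourth_vertex P Q R \<noteq> R" "fourth_vertex P Q R \<noteq> Q"
    "line R (fourth_vertex P Q R) = parl R (line P Q)" "line R (fourth_vertex P Q R) \<parallel> line P Q"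
    "line Q (fourth_vertex P Q R) = parl Q (line P R)" "line Q (fourth_vertex P Q R) \<parallel> line P R"
proof -
  let ?T = "fourth_vertex P Q R"
  have PR: "P \<noteq> R" using R line_props PQ by auto
  note lPQ = line_props[OF PQ] and lPR = line_props[OF PR]
  note l1 = parl_props[OF lPQ(1), of R] and l2 = parl_props[OF lPR(1), of Q]
  show T1: "?T \<in> parl R (line P Q)" "?T \<in> parl Q (line P R)"
    unfolding fourth_vertex_def using meet_props[OF l1(1) l2(1) fourth_vertex_lines_nonpar[OF PQ R]] by auto
  show T3: "?T \<notin> line P Q" using T1 parl_disjoint[OF lPQ(1) R] by auto
  show T4: "?T \<noteq> R"
  proof
    assume "?T = R"
    then have "parl Q (line P R) = line P R" using T1 par_common_point l2 lPR by metis
    then have "line P R = line P Q" using line_unique lPR lPQ l2 PQ by metis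
    then show False using R lPR by auto
  qed
  show T5: "?T \<noteq> Q" using T3 lPQ by auto
  show "line R ?T = parl R (line P Q)" "line R ?T \<parallel> line P Q"
    using line_eq l1 T1 T4 by metis+
  show "line Q ?T = parl Q (line P R)" "line Q ?T \<parallel> line P R"
    using line_eq l2 T1 T5 by metis+
qed

lemma fourth_vertex_unique:
  assumes PQ: "P \<noteq> Q" and R: "R \<notin> line P Q" and T: "T \<in> parl R (line P Q)" "T \<in> parl Q (line P R)"
  shows "fourth_vertex P Q R = T"
proof -
  have PR: "P \<noteq> R" using R line_props PQ by auto
  show ?thesis
    unfolding fourth_vertex_def
    using meet_eq_nonpar[OF _ _ fourth_vertex_lines_nonpar[OF PQ R] T] parl_props line_props PQ PR by metis
qed

lemma fourth_vertex_swap: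
  assumes PQ: "P \<noteq> Q" and R: "R \<notin> line P Q"
  shows "fourth_vertex R (fourth_vertex P Q R) P = Q" "fourth_vertex Q P (fourth_vertex P Q R) = R"
proof -
  let ?T = "fourth_vertex P Q R"
  have PR: "P \<noteq> R" using R line_props PQ by auto
  note lPQ = line_props[OF PQ] and lPR = line_props[OF PR]
  note V = fourth_vertex_props[OF PQ R]
  have RT: "R \<noteq> ?T" using V by auto
  have P1: "P \<notin> line R ?T" using V(6) parl_disjoint[OF lPQ(1) R] lPQ by auto
  have e1: "parl P (line R ?T) = line P Q" using parl_par_cong[OF V(7)] parl_self lPQ by metis
  have e2: "parl ?T (line R P) = line Q ?T"
    using parl_eq_line[of ?T Q "line R P"] V(5,9) line_sym by metis
  show "fourth_vertex R ?T P = Q"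
    using fourth_vertex_unique[OF RT P1] e1 e2 lPQ line_props(2)[OF V(5)[symmetric]] by auto
  have TQ: "?T \<notin> line Q P" using V(3) line_sym by metis
  have e3: "parl ?T (line Q P) = parl R (line P Q)" using parl_mem_eq V(1) lPQ line_sym by metis
  have e4: "parl P (line Q ?T) = line P R" using parl_par_cong[OF V(9)] parl_self lPR by metis
  show "fourth_vertex Q P ?T = R"
    using fourth_vertex_unique[OF PQ[symmetric] TQ] e3 e4 parl_props lPQ lPR by auto
qed

text \<open>Little Desargues for the triangles \<open>R P S\<close> and \<open>R' Q S'\<close>, whose corresponding vertices
  are joined by parallels to \<open>P Q\<close>.\<close>

lemma fourth_vertex_par_off_parl:
  assumes PQ: "P \<noteq> Q" and R: "R \<notin> line P Q" and S: "S \<notin> line P Q" and RS: "S \<notin> parl R (line P Q)"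
  shows "line R S \<parallel> line (fourth_vertex P Q R) (fourth_vertex P Q S)"
proof -
  let ?R' = "fourth_vertex P Q R" and ?S' = "fourth_vertex P Q S"
  note VR = fourth_vertex_props[OF PQ R] and VS = fourth_vertex_props[OF PQ S]
  note lPQ = line_props[OF PQ]
  have PR: "P \<noteq> R" "P \<noteq> S" using R S lPQ by auto
  note lPR = line_props[OF PR(1)] and lPS = line_props[OF PR(2)]
  note plR = parl_props[OF lPQ(1), of R] and plS = parl_props[OF lPQ(1), of S]
  have RS': "R \<noteq> S" using RS plR by auto
  have ne3: "parl R (line P Q) \<noteq> parl S (line P Q)" using RS plS by auto
  moreover have "parl R (line P Q) \<parallel> parl S (line P Q)" using plR plS par_trans par_sym by blast
  ultimately have "parl R (line P Q) \<inter> parl S (line P Q) = {}" unfolding par_def by auto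
  then have R'S': "?R' \<noteq> ?S'" using VR(1) VS(1) by auto
  have ne1: "parl R (line P Q) \<noteq> line P Q" using R plR by auto
  have ne2: "parl S (line P Q) \<noteq> line P Q" using S plS by auto
  have a1: "line R P \<noteq> line ?R' Q"
  proof
    assume "line R P = line ?R' Q"
    then have "Q \<in> line P R" using line_props VR(5) line_sym by metis
    then have "line P R = line P Q" using line_unique lPR lPQ PQ by metis
    then show False using R lPR by auto
  qed
  have a2: "line P S \<noteq> line Q ?S'"
  proof
    assume "line P S = line Q ?S'"
    then have "Q \<in> line P S" using line_props VS(5) by metis
    then have "line P S = line P Q" using line_unique lPS lPQ PQ by metis
    then show False using S lPS by auto
  qed
  have p1: "line R P \<parallel> line ?R' Q" using VR(9) line_sym par_sym by metis
  have p2: "line P S \<parallel> line Q ?S'" using VS(9) par_sym by metis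
  show ?thesis
    apply (rule desargues_par[of R ?R' P Q S ?S'])
    using VR VS PQ PR RS' R'S' ne1 ne2 ne3 a1 a2 p1 p2 par_sym line_sym plR plS
    by auto
qed

lemma fourth_vertex_par:
  assumes BB: "B \<noteq> B'" and R: "R \<notin> line B B'" and S: "S \<notin> line B B'" and RS: "R \<noteq> S"
  shows "fourth_vertex B B' R \<noteq> fourth_vertex B B' S"
    "line R S \<parallel> line (fourth_vertex B B' R) (fourth_vertex B B' S)"
proof -
  let ?R' = "fourth_vertex B B' R" and ?S' = "fourth_vertex B B' S" and ?k = "parl R (line B B')"
  note lB = line_props[OF BB] and k = parl_props[OF lB(1), of R]
  note VR = fourth_vertex_props[OF BB R] and VS = fourth_vertex_props[OF BB S]
  show ne: "?R' \<noteq> ?S'"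
  proof
    assume eq: "?R' = ?S'"
    then have "parl S (line B B') = ?k" using parl_mem_eq[OF lB(1)] VR(1) VS(1) by metis
    then have Sk: "S \<in> ?k" using parl_props(2)[OF lB(1), of S] by simp
    have BR: "B \<noteq> R" "B \<noteq> S" using R S lB by auto
    note lBR = line_props[OF BR(1)] and lBS = line_props[OF BR(2)]
    have "S \<notin> line B R"
    proof
      assume "S \<in> line B R"
      then have "line B R = ?k" using line_unique[OF lBR(1) k(1) lBR(3) k(2) _ Sk RS] by auto
      then show False using parl_disjoint[OF lB(1) R] lB(2) lBR(2) by auto
    qed
    then have "\<not> parl B' (line B R) \<parallel> parl B' (line B S)"
      using nonpar_cong[OF lines_through_nonpar[OF BR(1)]] parl_props(3) lBR(1) lBS(1) par_sym by metis
    then have "?R' = B'"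
      using nonpar_common_point_unique parl_props(1,2) lBR(1) lBS(1) VR(2) VS(2)[folded eq] by metis
    then show False using VR(3) lB by auto
  qed
  show "line R S \<parallel> line ?R' ?S'"
  proof (cases "S \<in> ?k")
    case False
    then show ?thesis using fourth_vertex_par_off_parl[OF BB R S] by simp
  next
    case True
    have "?S' \<in> ?k" using VS(1) parl_mem_eq[OF lB(1) True] by simp
    then have "line R S = ?k" "line ?R' ?S' = ?k" using line_eq k True RS VR(1) ne by auto
    then show ?thesis using par_refl k by auto
  qed
qed

lemma fourth_vertex_transfer:
  assumes PQ: "P \<noteq> Q" and X: "X \<notin> line P Q" and S: "S \<notin> line P Q"
    and S2: "S \<notin> parl X (line P Q)"
  shows "fourth_vertex X (fourth_vertex P Q X) S = fourth_vertex P Q S"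
proof -
  let ?X' = "fourth_vertex P Q X" and ?S' = "fourth_vertex P Q S"
  note VX = fourth_vertex_props[OF PQ X] and VS = fourth_vertex_props[OF PQ S]
  note lPQ = line_props[OF PQ]
  have XX: "X \<noteq> ?X'" using VX by auto
  have SX: "S \<notin> line X ?X'" using S2 VX(6) by auto
  have X'S': "?X' \<noteq> ?S'"
  proof
    assume "?X' = ?S'"
    then have "parl X (line P Q) = parl S (line P Q)" using parl_mem_eq VX(1) VS(1) lPQ by metis
    then show False using S2 parl_props lPQ by metis
  qed
  have e1: "parl S (line X ?X') = parl S (line P Q)" using parl_par_cong VX(7) by metis
  have e2: "parl ?X' (line X S) = line ?X' ?S'"
    using parl_eq_line[OF X'S'] fourth_vertex_par_off_parl[OF PQ X S S2] par_sym by metis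
  show ?thesis
    using fourth_vertex_unique[OF XX SX] e1 e2 VS line_props X'S' by auto
qed

lemma fourth_vertex_change_base:
  assumes PQ: "P \<noteq> Q" and X: "X \<notin> line P Q" and W: "W \<notin> line P Q" "W \<notin> parl X (line P Q)"
    and Y: "Y \<notin> parl X (line P Q)" "Y \<notin> parl W (line P Q)"
  shows "fourth_vertex X (fourth_vertex P Q X) Y = fourth_vertex W (fourth_vertex P Q W) Y"
proof -
  let ?X' = "fourth_vertex P Q X"
  note VX = fourth_vertex_props[OF PQ X]
  have XX: "X \<noteq> ?X'" using VX(4) by simp
  have W': "fourth_vertex X ?X' W = fourth_vertex P Q W" using fourth_vertex_transfer[OF PQ X W] .
  have "W \<notin> line X ?X'" "Y \<notin> line X ?X'" "Y \<notin> parl W (line X ?X')"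
    using W(2) Y VX(6) parl_par_cong[OF VX(7)] by simp_all
  then show ?thesis using fourth_vertex_transfer[OF XX, of W Y] W' by simp
qed

end

section \<open>Dilatations and translations\<close>

context affine_incidence
begin

definition is_dilatation :: "('p \<Rightarrow> 'p) \<Rightarrow> bool" where
  "is_dilatation \<sigma> \<longleftrightarrow> (\<forall>P Q. P \<noteq> Q \<longrightarrow> \<sigma> P \<noteq> \<sigma> Q \<and> line P Q \<parallel> line (\<sigma> P) (\<sigma> Q))"

definition is_translation :: "('p \<Rightarrow> 'p) \<Rightarrow> bool" where
  "is_translation \<sigma> \<longleftrightarrow> is_dilatation \<sigma> \<and> (\<sigma> = id \<or> (\<forall>Y. \<sigma> Y \<noteq> Y))"

lemma dilatation_id: "is_dilatation id"
  unfolding is_dilatation_def by (auto intro: par_refl line_props(1))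

lemma dilatation_comp: "is_dilatation \<sigma> \<Longrightarrow> is_dilatation \<rho> \<Longrightarrow> is_dilatation (\<sigma> \<circ> \<rho>)"
  unfolding is_dilatation_def by (metis comp_apply par_trans)

lemma dilatationD: "is_dilatation \<sigma> \<Longrightarrow> P \<noteq> Q \<Longrightarrow> \<sigma> P \<noteq> \<sigma> Q \<and> line P Q \<parallel> line (\<sigma> P) (\<sigma> Q)"
  unfolding is_dilatation_def by auto

lemma dilatation_parl: "is_dilatation \<sigma> \<Longrightarrow> P \<noteq> Q \<Longrightarrow> \<sigma> Q \<in> parl (\<sigma> P) (line P Q)"
  using dilatationD par_mem_parl by blast

lemma dilatation_fixpoint_line:
  assumes "is_dilatation \<sigma>" "\<sigma> C = C" "Y \<noteq> C" shows "\<sigma> Y \<in> line C Y"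
  using dilatation_parl[OF assms(1), of C Y] assms(2,3) parl_self[OF line_props(1,2)[OF assms(3)[symmetric]]]
  by simp

lemma dilatation_eq_off_line:
  assumes s: "is_dilatation \<sigma>" and r: "is_dilatation \<rho>" and PQ: "P \<noteq> Q"
    and e: "\<sigma> P = \<rho> P" "\<sigma> Q = \<rho> Q" and R: "R \<notin> line P Q"
  shows "\<sigma> R = \<rho> R"
proof -
  have PR: "P \<noteq> R" "Q \<noteq> R" using R line_props(2,3)[OF PQ] by auto
  note lPR = line_props[OF PR(1)] and lQR = line_props[OF PR(2)]
  have "Q \<notin> line P R"
  proof
    assume "Q \<in> line P R"
    then have "line P R = line P Q" using line_eq[OF lPR(1,2) _ PQ] by simp
    then show False using R lPR(3) by simp
  qed
  then have "\<not> line R P \<parallel> line R Q" using lines_through_nonpar[OF PR(1)[symmetric]] line_sym by metis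
  then have "\<not> line P R \<parallel> line Q R" using line_sym by metis
  then have np: "\<not> parl (\<sigma> P) (line P R) \<parallel> parl (\<sigma> Q) (line Q R)"
    using nonpar_cong par_sym[OF parl_props(3)[OF lPR(1)]] par_sym[OF parl_props(3)[OF lQR(1)]] by blast
  have "\<sigma> R \<in> parl (\<sigma> P) (line P R)" "\<sigma> R \<in> parl (\<sigma> Q) (line Q R)"
    "\<rho> R \<in> parl (\<sigma> P) (line P R)" "\<rho> R \<in> parl (\<sigma> Q) (line Q R)"
    using dilatation_parl[OF s PR(1)] dilatation_parl[OF s PR(2)]
      dilatation_parl[OF r PR(1)] dilatation_parl[OF r PR(2)] e by simp_all
  then show ?thesis
    using nonpar_common_point_unique[OF np parl_props(1)[OF lPR(1)] parl_props(1)[OF lQR(1)]] by blast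
qed

lemma dilatation_eq_two_points:
  assumes s: "is_dilatation \<sigma>" and r: "is_dilatation \<rho>" and PQ: "P \<noteq> Q"
    and e: "\<sigma> P = \<rho> P" "\<sigma> Q = \<rho> Q"
  shows "\<sigma> = \<rho>"
proof
  fix R
  obtain X where X: "X \<notin> line P Q" using point_off_line line_props PQ by blast
  have PX: "P \<noteq> X" using X line_props(2)[OF PQ] by auto
  have eX: "\<sigma> X = \<rho> X" using dilatation_eq_off_line[OF s r PQ e X] .
  show "\<sigma> R = \<rho> R"
  proof (cases "R \<in> line P Q \<and> R \<noteq> P")
    case True
    have "R \<notin> line P X"
    proof
      assume "R \<in> line P X"
      then have "line P X = line P Q"
        using line_unique[OF line_props(1)[OF PX] line_props(1)[OF PQ] line_props(2)[OF PX] line_props(2)[OF PQ]] True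
        by auto
      then show False using X line_props(3)[OF PX] by simp
    qed
    then show ?thesis using dilatation_eq_off_line[OF s r PX e(1) eX] by auto
  next
    case False
    then show ?thesis using dilatation_eq_off_line[OF s r PQ e] e by auto
  qed
qed

lemma dilatation_trace:
  assumes s: "is_dilatation \<sigma>" and PP: "P \<noteq> \<sigma> P" and Q: "Q \<in> line P (\<sigma> P)"
  shows "\<sigma> Q \<in> line P (\<sigma> P)"
proof (cases "Q = P")
  case True then show ?thesis using line_props(3)[OF PP] by auto
next
  case False
  have "line P Q = line P (\<sigma> P)" using line_eq[OF line_props(1,2)[OF PP] Q] False by auto
  then show ?thesis
    using dilatation_parl[OF s False[symmetric]] parl_self[OF line_props(1,3)[OF PP]] by simp
qed

text \<open>A fixed point would lie on two non-parallel traces.\<close>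

lemma fixpoint_free_traces_par:
  assumes s: "is_dilatation \<sigma>" and fp: "\<And>Y. \<sigma> Y \<noteq> Y"
  shows "line P (\<sigma> P) \<parallel> line Q (\<sigma> Q)"
proof (rule ccontr)
  assume np: "\<not> line P (\<sigma> P) \<parallel> line Q (\<sigma> Q)"
  have PP: "P \<noteq> \<sigma> P" "Q \<noteq> \<sigma> Q" using fp by metis+
  note l1 = line_props[OF PP(1)] and l2 = line_props[OF PP(2)]
  obtain C where C: "C \<in> line P (\<sigma> P)" "C \<in> line Q (\<sigma> Q)"
    using np l1(1) l2(1) unfolding par_def by auto
  then have "\<sigma> C = C"
    using nonpar_common_point_unique[OF np l1(1) l2(1)] dilatation_trace[OF s PP(1)]
      dilatation_trace[OF s PP(2)] by blast
  then show False using fp by auto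
qed

end

context desarguesian
begin

text \<open>Off the line \<open>P Q\<close> the translation completes parallelograms on \<open>P Q\<close>; on the line it
  completes parallelograms on the translate of a fixed auxiliary point.\<close>

definition translation :: "'p \<Rightarrow> 'p \<Rightarrow> 'p \<Rightarrow> 'p" where
  "translation P Q R = (if P = Q then R else if R \<notin> line P Q then fourth_vertex P Q R
     else fourth_vertex (aux_point P Q) (fourth_vertex P Q (aux_point P Q)) R)"

lemma translation_refl: "translation P P = id"
  by (rule ext) (simp add: translation_def)

lemma translation_off_line: "P \<noteq> Q \<Longrightarrow> R \<notin> line P Q \<Longrightarrow> translation P Q R = fourth_vertex P Q R"
  unfolding translation_def by simp

lemma translation_app: "translation P Q P = Q"
proof (cases "P = Q")
  case False
  then show ?thesis
    using fourth_vertex_swap(1)[OF False aux_point_off_line[OF False]] line_props(2)[OF False]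
    unfolding translation_def by simp
qed (simp add: translation_def)

lemma translation_moves_along:
  assumes PQ: "P \<noteq> Q"
  shows "translation P Q Y \<in> parl Y (line P Q)" "translation P Q Y \<noteq> Y"
proof -
  have "translation P Q Y \<in> parl Y (line P Q) \<and> translation P Q Y \<noteq> Y"
  proof (cases "Y \<in> line P Q")
    case True
    let ?X = "aux_point P Q"
    note VX = fourth_vertex_props[OF PQ aux_point_off_line[OF PQ]]
    have XX: "?X \<noteq> fourth_vertex P Q ?X" using VX(4) by simp
    have "Y \<notin> line ?X (fourth_vertex P Q ?X)"
      using VX(6) parl_disjoint[OF line_props(1)[OF PQ] aux_point_off_line[OF PQ]] True by auto
    then show ?thesis
      using fourth_vertex_props(1,4)[OF XX] parl_par_cong[OF VX(7)] True PQ
      unfolding translation_def by simp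
  next
    case False
    then show ?thesis
      using fourth_vertex_props(1,4)[OF PQ False] translation_off_line[OF PQ False] by simp
  qed
  then show "translation P Q Y \<in> parl Y (line P Q)" "translation P Q Y \<noteq> Y" by simp_all
qed

lemma translation_on_line:
  assumes l: "l \<in> L" and PQY: "P \<in> l" "Q \<in> l" "Y \<in> l"
  shows "translation P Q Y \<in> l"
proof (cases "P = Q")
  case False
  then show ?thesis
    using translation_moves_along(1)[OF False, of Y] line_eq[OF l PQY(1,2) False] parl_self[OF l PQY(3)] by simp
qed (simp add: translation_refl PQY)

lemma translation_eq_fourth_vertex:
  assumes large: "\<not> two_line_cover" and PQ: "P \<noteq> Q" and W: "W \<notin> line P Q"
    and Y: "Y \<notin> parl W (line P Q)"
  shows "translation P Q Y = fourth_vertex W (fourth_vertex P Q W) Y"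
proof (cases "Y \<in> line P Q")
  case False
  then show ?thesis
    using translation_off_line[OF PQ False] fourth_vertex_transfer[OF PQ W False Y] by simp
next
  case True
  let ?l = "line P Q" and ?X = "aux_point P Q"
  note l = line_props[OF PQ]
  have X: "?X \<notin> ?l" using aux_point_off_line[OF PQ] .
  have Yl: "Y \<notin> parl V ?l" if "V \<notin> ?l" for V using parl_disjoint[OF l(1) that] True by auto
  have on_line: "translation P Q Y = fourth_vertex V (fourth_vertex P Q V) Y"
    if "V \<notin> ?l" "V \<notin> parl ?X ?l" for V
    using fourth_vertex_change_base[OF PQ X that Yl[OF X] Yl[OF that(1)]] True PQ
    unfolding translation_def by simp
  show ?thesis
  proof (cases "W \<in> parl ?X ?l")
    case False
    then show ?thesis using on_line[OF W] by simp
  next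
    case True
    obtain V where V: "V \<notin> ?l" "V \<notin> parl ?X ?l"
      using point_off_two_lines[OF large l(1) parl_props(1)[OF l(1)]] .
    have "W \<notin> parl V ?l"
    proof
      assume "W \<in> parl V ?l"
      then have "parl V ?l = parl ?X ?l" using parl_mem_eq[OF l(1) True] parl_mem_eq[OF l(1)] by metis
      then show False using V(2) parl_props(2)[OF l(1), of V] by simp
    qed
    then show ?thesis
      using on_line[OF V] fourth_vertex_change_base[OF PQ V(1) W(1) _ Yl[OF V(1)] Y] by simp
  qed
qed

lemma translation_dilatation:
  assumes large: "\<not> two_line_cover" and PQ: "P \<noteq> Q"
  shows "is_dilatation (translation P Q)"
  unfolding is_dilatation_def
proof (intro allI impI)
  fix R S :: 'p
  assume RS: "R \<noteq> S"
  let ?l = "line P Q" and ?t = "translation P Q"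
  note l = line_props[OF PQ]
  show "?t R \<noteq> ?t S \<and> line R S \<parallel> line (?t R) (?t S)"
  proof (cases "R \<in> ?l \<or> S \<in> ?l")
    case False
    then show ?thesis using fourth_vertex_par[OF PQ _ _ RS] translation_off_line[OF PQ] by simp
  next
    case True
    define K where "K = (if R \<in> ?l then S else R)"
    obtain W where W: "W \<notin> ?l" "W \<notin> parl K ?l"
      using point_off_two_lines[OF large l(1) parl_props(1)[OF l(1)]] .
    have "W \<notin> parl R ?l" "W \<notin> parl S ?l"
      using W True parl_self[OF l(1)] unfolding K_def by (auto split: if_splits)
    have RS': "R \<notin> parl W ?l" "S \<notin> parl W ?l"
      using parl_mem_eq[OF l(1), of R W] parl_mem_eq[OF l(1), of S W] parl_props(2)[OF l(1)]
        \<open>W \<notin> parl R ?l\<close> \<open>W \<notin> parl S ?l\<close> by force+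
    note VW = fourth_vertex_props[OF PQ W(1)]
    have WW: "W \<noteq> fourth_vertex P Q W" using VW(4) by simp
    show ?thesis
      using fourth_vertex_par[OF WW _ _ RS] RS' VW(6) translation_eq_fourth_vertex[OF large PQ W(1)] by simp
  qed
qed

lemma is_translation_translation:
  assumes large: "\<not> two_line_cover" shows "is_translation (translation P Q)"
  using translation_dilatation[OF large] translation_moves_along(2) translation_refl dilatation_id
  unfolding is_translation_def by (cases "P = Q") auto

lemma translation_image_eq_fourth_vertex:
  assumes t: "is_translation \<sigma>" and PP: "\<sigma> P \<noteq> P" and R: "R \<notin> line P (\<sigma> P)"
  shows "\<sigma> R = fourth_vertex P (\<sigma> P) R"
proof -
  have s: "is_dilatation \<sigma>" and fp: "\<And>Y. \<sigma> Y \<noteq> Y" using t PP unfolding is_translation_def by auto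
  have PP': "P \<noteq> \<sigma> P" using PP by auto
  have PR: "P \<noteq> R" using R line_props(2)[OF PP'] by auto
  have "R \<noteq> \<sigma> R" using fp[of R] by simp
  then have "\<sigma> R \<in> parl R (line P (\<sigma> P))"
    using par_mem_parl par_sym[OF fixpoint_free_traces_par[OF s fp, of R P]] by simp
  then show ?thesis using fourth_vertex_unique[OF PP' R] dilatation_parl[OF s PR] by auto
qed

lemma translation_eq_one_point:
  assumes s: "is_translation \<sigma>" and r: "is_translation \<rho>" and e: "\<sigma> P = \<rho> P"
  shows "\<sigma> = \<rho>"
proof (cases "\<sigma> P = P")
  case True
  have "\<sigma> = id" using s True unfolding is_translation_def by auto
  moreover have "\<rho> = id" using r True e unfolding is_translation_def by auto
  ultimately show ?thesis by simp
next
  case False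
  have ds: "is_dilatation \<sigma>" "is_dilatation \<rho>" using s r unfolding is_translation_def by auto
  note l = line_props[OF False[symmetric]]
  obtain R where R: "R \<notin> line P (\<sigma> P)" using point_off_line[OF l(1)] by blast
  have PR: "P \<noteq> R" using R l(2) by blast
  have "\<rho> P \<noteq> P" "R \<notin> line P (\<rho> P)" using False R e by simp_all
  then have "\<sigma> R = \<rho> R"
    using translation_image_eq_fourth_vertex[OF s False R] translation_image_eq_fourth_vertex[OF r, of P R] e
    by simp
  then show ?thesis using dilatation_eq_two_points[OF ds PR e] by simp
qed

lemma translation_inverse:
  assumes large: "\<not> two_line_cover" shows "translation Q P \<circ> translation P Q = id"
proof (cases "P = Q")
  case True then show ?thesis using translation_refl by simp
next
  case False
  have d: "is_dilatation (translation Q P \<circ> translation P Q)"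
    using dilatation_comp translation_dilatation[OF large False] translation_dilatation[OF large False[symmetric]]
    by blast
  obtain X where X: "X \<notin> line P Q" using point_off_line[OF line_props(1)[OF False]] by blast
  have PX: "P \<noteq> X" using X line_props(2)[OF False] by auto
  have X': "fourth_vertex P Q X \<notin> line Q P" using fourth_vertex_props(3)[OF False X] line_sym by metis
  have "(translation Q P \<circ> translation P Q) X = id X"
    using translation_off_line[OF False X] translation_off_line[OF False[symmetric] X']
      fourth_vertex_swap(2)[OF False X] by simp
  then show ?thesis
    using dilatation_eq_two_points[OF d dilatation_id PX] translation_app[of P Q] translation_app[of Q P] by simp
qed

lemma is_translation_comp:
  assumes large: "\<not> two_line_cover" and s: "is_translation \<sigma>" and r: "is_translation \<rho>"
  shows "is_translation (\<sigma> \<circ> \<rho>)"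
proof (cases "\<exists>Y. \<sigma> (\<rho> Y) = Y")
  case False
  then show ?thesis using s r dilatation_comp unfolding is_translation_def by auto
next
  case True
  then obtain Y where Y: "\<sigma> (\<rho> Y) = Y" by auto
  define Q where "Q = \<rho> Y"
  have "\<sigma> = translation Q Y"
    using translation_eq_one_point[OF s is_translation_translation[OF large], of Q] Y Q_def
    by (simp add: translation_app)
  moreover have "\<rho> = translation Y Q"
    using translation_eq_one_point[OF r is_translation_translation[OF large], of Y] Q_def
    by (simp add: translation_app)
  ultimately have "\<sigma> \<circ> \<rho> = id" using translation_inverse[OF large, of Q Y] by simp
  then show ?thesis using dilatation_id unfolding is_translation_def by auto
qed

end

section \<open>Central dilatations\<close>

context desarguesian
begin

text \<open>For \<open>R\<close> off the line \<open>Z U\<close>: the image of \<open>R\<close> under the dilatation with centre \<open>Z\<close>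
  taking \<open>U\<close> to \<open>A\<close>.\<close>

definition dil_image :: "'p \<Rightarrow> 'p \<Rightarrow> 'p \<Rightarrow> 'p \<Rightarrow> 'p" where
  "dil_image Z U A R = meet (line Z R) (parl A (line U R))"

lemma dil_image_props:
  assumes ZU: "Z \<noteq> U" and A: "A \<in> line Z U" "A \<noteq> Z" and R: "R \<notin> line Z U"
  shows "dil_image Z U A R \<in> line Z R" "dil_image Z U A R \<in> parl A (line U R)"
    "dil_image Z U A R \<noteq> Z" "dil_image Z U A R \<notin> line Z U" "A \<noteq> U \<Longrightarrow> dil_image Z U A R \<noteq> R"
proof -
  let ?l = "line Z U" and ?T = "dil_image Z U A R"
  note lZ = line_props[OF ZU]
  have RZ: "R \<noteq> Z" "R \<noteq> U" using R lZ by auto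
  note lZR = line_props[OF RZ(1)[symmetric]] and lUR = line_props[OF RZ(2)[symmetric]]
  note p1 = parl_props[OF lUR(1), of A]
  have "U \<notin> line R Z" using line_eq[OF _ _ _ ZU] line_props[OF RZ(1)] R by metis
  then have "\<not> line Z R \<parallel> line U R" using lines_through_nonpar[OF RZ(1)] line_sym by metis
  then have np: "\<not> line Z R \<parallel> parl A (line U R)"
    using nonpar_cong[OF _ par_refl[OF lZR(1)] par_sym[OF p1(3)]] by blast
  show T1: "?T \<in> line Z R" "?T \<in> parl A (line U R)"
    unfolding dil_image_def using meet_props[OF lZR(1) p1(1) np] by auto
  show T3: "?T \<noteq> Z"
  proof
    assume "?T = Z"
    then have "parl A (line U R) = line Z A" using line_eq[OF p1(1) _ p1(2)] T1(2) A(2) by auto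
    also have "\<dots> = ?l" using line_eq[OF lZ(1) lZ(2) A(1) A(2)[symmetric]] .
    finally have "?l = line U R" using p1(3) par_common_point lZ(3) lUR(2) by metis
    then show False using R lUR(3) by simp
  qed
  show "?T \<notin> ?l"
  proof
    assume "?T \<in> ?l"
    then have "line Z R = ?l" using line_unique[OF lZR(1) lZ(1) lZR(2) lZ(2) T1(1)] T3 by auto
    then show False using R lZR(3) by simp
  qed
  assume AU: "A \<noteq> U"
  show "?T \<noteq> R"
  proof
    assume "?T = R"
    then have "A \<in> line U R" using par_common_point[OF p1(3)] T1(2) lUR(3) p1(2) by auto
    then have "line U R = ?l" using line_unique[OF lUR(1) lZ(1) lUR(2) lZ(3) _ A(1) AU[symmetric]] by auto
    then show False using R lUR(3) by simp
  qed
qed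

lemma dil_image_unique:
  assumes ZU: "Z \<noteq> U" and R: "R \<notin> line Z U" and T: "T \<in> line Z R" "T \<in> parl A (line U R)"
  shows "dil_image Z U A R = T"
proof -
  have RZ: "R \<noteq> Z" "R \<noteq> U" using R line_props[OF ZU] by auto
  note lZR = line_props[OF RZ(1)[symmetric]] and lUR = line_props[OF RZ(2)[symmetric]]
  have "line Z R \<noteq> parl A (line U R)"
  proof
    assume "line Z R = parl A (line U R)"
    then have "line Z R = line U R" using parl_props(3)[OF lUR(1)] par_common_point lZR(3) lUR(3) by metis
    then have "line Z R = line Z U" using line_eq[OF lZR(1) lZR(2) _ ZU] lUR(2) by auto
    then show False using R lZR(3) by simp
  qed
  then show ?thesis unfolding dil_image_def using meet_eq[OF lZR(1) parl_props(1)[OF lUR(1)]] T by auto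
qed

lemma dil_image_inj:
  assumes ZB: "Z \<noteq> B" and B': "B' \<in> line Z B" "B' \<noteq> Z"
    and R: "R \<notin> line Z B" and S: "S \<notin> line Z B" and RS: "R \<noteq> S"
  shows "dil_image Z B B' R \<noteq> dil_image Z B B' S"
proof
  let ?k = "line Z R" and ?R' = "dil_image Z B B' R" and ?S' = "dil_image Z B B' S"
  assume eq: "?R' = ?S'"
  have RZ: "Z \<noteq> R" "Z \<noteq> S" "B \<noteq> R" "B \<noteq> S" using R S line_props(2,3)[OF ZB] by auto
  note k = line_props[OF RZ(1)] and lZS = line_props[OF RZ(2)]
  note lBR = line_props[OF RZ(3)] and lBS = line_props[OF RZ(4)]
  note VR = dil_image_props[OF ZB B' R] and VS = dil_image_props[OF ZB B' S]
  have "line Z S = ?k"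
    using line_unique[OF lZS(1) k(1) lZS(2) k(2) VS(1)[folded eq] VR(1) VR(3)[symmetric]] .
  then have Sk: "S \<in> ?k" using lZS(3) by simp
  have "S \<notin> line B R"
  proof
    assume "S \<in> line B R"
    then have "line B R = ?k" using line_unique[OF lBR(1) k(1) lBR(3) k(3) _ Sk RS] by auto
    then have "?k = line Z B" using line_eq[OF k(1,2) _ ZB] lBR(2) by simp
    then show False using R k(3) by simp
  qed
  then have "\<not> parl B' (line B R) \<parallel> parl B' (line B S)"
    using nonpar_cong[OF lines_through_nonpar[OF RZ(3)] par_sym[OF parl_props(3)[OF lBR(1)]]
        par_sym[OF parl_props(3)[OF lBS(1)]]] by blast
  then have "?R' = B'"
    using nonpar_common_point_unique[OF _ parl_props(1)[OF lBR(1)] parl_props(1)[OF lBS(1)] VR(2)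
        VS(2)[folded eq] parl_props(2)[OF lBR(1)] parl_props(2)[OF lBS(1)]] by blast
  then show False using VR(4) B'(1) by simp
qed

lemma dil_image_side:
  assumes ZU: "Z \<noteq> U" and A: "A \<in> line Z U" "A \<noteq> Z" and AU: "A \<noteq> U" and R: "R \<notin> line Z U"
  shows "line U R \<parallel> line A (dil_image Z U A R)" "line U R \<noteq> line A (dil_image Z U A R)"
proof -
  let ?R' = "dil_image Z U A R"
  note VR = dil_image_props[OF ZU A R]
  have UR: "U \<noteq> R" using R line_props(3)[OF ZU] by auto
  note lUR = line_props[OF UR]
  have AR': "A \<noteq> ?R'" using VR(4) A(1) by auto
  have "line A ?R' = parl A (line U R)"
    using line_eq[OF parl_props(1)[OF lUR(1)] parl_props(2)[OF lUR(1)] VR(2) AR'] .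
  then show "line U R \<parallel> line A ?R'" using par_sym[OF parl_props(3)[OF lUR(1)]] by simp
  show "line U R \<noteq> line A ?R'"
  proof
    assume "line U R = line A ?R'"
    then have "line U R = line Z U"
      using line_unique[OF lUR(1) line_props(1)[OF ZU] lUR(2) line_props(3)[OF ZU] _ A(1) AU[symmetric]]
        line_props(2)[OF AR'] by auto
    then show False using R lUR(3) by simp
  qed
qed

text \<open>Desargues' theorem for the triangles \<open>R U S\<close> and \<open>R' A S'\<close>, in perspective from \<open>Z\<close>.\<close>

lemma dil_image_par_off_line:
  assumes ZU: "Z \<noteq> U" and A: "A \<in> line Z U" "A \<noteq> Z" and AU: "A \<noteq> U"
    and R: "R \<notin> line Z U" and S: "S \<notin> line Z U" and RS: "S \<notin> line Z R"
  shows "line R S \<parallel> line (dil_image Z U A R) (dil_image Z U A S)"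
proof -
  let ?R' = "dil_image Z U A R" and ?S' = "dil_image Z U A S" and ?l = "line Z U"
  note VR = dil_image_props[OF ZU A R] and VS = dil_image_props[OF ZU A S]
  note lZ = line_props[OF ZU]
  have RZ: "R \<noteq> Z" "S \<noteq> Z" "R \<noteq> U" "S \<noteq> U" using R S lZ by auto
  note lZR = line_props[OF RZ(1)[symmetric]] and lZS = line_props[OF RZ(2)[symmetric]]
  have RS': "R \<noteq> S" using RS lZR by auto
  have RR: "R \<noteq> ?R'" "S \<noteq> ?S'" using VR(5)[OF AU] VS(5)[OF AU] by auto
  have eR: "line R ?R' = line Z R" using line_eq[OF lZR(1) lZR(3) VR(1) RR(1)] .
  have eS: "line S ?S' = line Z S" using line_eq[OF lZS(1) lZS(3) VS(1) RR(2)] .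
  have eUA: "line U A = ?l" using line_eq[OF lZ(1) lZ(3) A(1) AU[symmetric]] .
  have "line Z R \<noteq> line Z S" "line Z R \<noteq> ?l" "line Z S \<noteq> ?l" using R S RS lZR(3) lZS(3) by auto
  moreover have "?R' \<noteq> ?S'" "?R' \<noteq> A" "A \<noteq> ?S'"
    using dil_image_inj[OF ZU A R S RS'] VR(4) VS(4) A by auto
  moreover have "line R U \<parallel> line ?R' A" "line R U \<noteq> line ?R' A"
    using dil_image_side[OF ZU A AU R] line_sym[of R U] line_sym[of A ?R'] by simp_all
  moreover have "line U S \<parallel> line A ?S'" "line U S \<noteq> line A ?S'" using dil_image_side[OF ZU A AU S] .
  moreover have "\<exists>P. P \<in> line R ?R' \<and> P \<in> line U A \<and> P \<in> line S ?S'"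
    using eR eS eUA lZR(2) lZS(2) lZ(2) by auto
  ultimately show ?thesis
    using desargues_par[of R ?R' U A S ?S'] RR AU RZ RS' eR eS eUA by auto
qed

lemma dil_image_par:
  assumes ZB: "Z \<noteq> B" and B': "B' \<in> line Z B" "B' \<noteq> Z" "B' \<noteq> B"
    and R: "R \<notin> line Z B" and S: "S \<notin> line Z B" and RS: "R \<noteq> S"
  shows "line R S \<parallel> line (dil_image Z B B' R) (dil_image Z B B' S)"
proof (cases "S \<in> line Z R")
  case False
  then show ?thesis using dil_image_par_off_line[OF ZB B' R S] by simp
next
  case True
  let ?k = "line Z R" and ?R' = "dil_image Z B B' R" and ?S' = "dil_image Z B B' S"
  have RZ: "Z \<noteq> R" "Z \<noteq> S" using R S line_props(2)[OF ZB] by auto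
  note k = line_props[OF RZ(1)]
  note VR = dil_image_props[OF ZB B'(1,2) R] and VS = dil_image_props[OF ZB B'(1,2) S]
  have "?S' \<in> ?k" using VS(1) line_eq_through[OF RZ(1) True RZ(2)] by simp
  then have "line R S = ?k" "line ?R' ?S' = ?k"
    using line_eq[OF k(1) k(3) True RS] line_eq[OF k(1) VR(1) _ dil_image_inj[OF ZB B'(1,2) R S RS]]
    by simp_all
  then show ?thesis using par_refl[OF k(1)] by simp
qed

lemma dil_image_transfer:
  assumes ZU: "Z \<noteq> U" and A: "A \<in> line Z U" "A \<noteq> Z" and AU: "A \<noteq> U"
    and X: "X \<notin> line Z U" and S: "S \<notin> line Z U" and SX: "S \<notin> line Z X"
  shows "dil_image Z X (dil_image Z U A X) S = dil_image Z U A S"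
proof -
  let ?X' = "dil_image Z U A X" and ?S' = "dil_image Z U A S"
  note VX = dil_image_props[OF ZU A X] and VS = dil_image_props[OF ZU A S]
  have ZX: "Z \<noteq> X" using X line_props(2)[OF ZU] by auto
  have ZS: "Z \<noteq> S" using S line_props(2)[OF ZU] by auto
  have "X \<noteq> S" using SX line_props(3)[OF ZX] by auto
  then have X'S': "?X' \<noteq> ?S'" using dil_image_inj[OF ZU A X S] by simp
  have "?S' \<in> parl ?X' (line X S)"
    using par_mem_parl[OF X'S' dil_image_par_off_line[OF ZU A AU X S SX]] .
  then show ?thesis using dil_image_unique[OF ZX SX] VS(1) by auto
qed

lemma dil_image_change_base:
  assumes ZU: "Z \<noteq> U" and A: "A \<in> line Z U" "A \<noteq> Z" and AU: "A \<noteq> U"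
    and X: "X \<notin> line Z U" and W: "W \<notin> line Z U" "W \<notin> line Z X"
    and Y: "Y \<notin> line Z X" "Y \<notin> line Z W"
  shows "dil_image Z X (dil_image Z U A X) Y = dil_image Z W (dil_image Z U A W) Y"
proof -
  let ?X' = "dil_image Z U A X"
  note VX = dil_image_props[OF ZU A X]
  have ZX: "Z \<noteq> X" using X line_props(2)[OF ZU] by auto
  have W': "dil_image Z X ?X' W = dil_image Z U A W" using dil_image_transfer[OF ZU A AU X W] .
  show ?thesis
    using dil_image_transfer[OF ZX VX(1) VX(3) VX(5)[OF AU] W(2) Y] W' by simp
qed

definition central_dilatation :: "'p \<Rightarrow> 'p \<Rightarrow> 'p \<Rightarrow> 'p \<Rightarrow> 'p" where
  "central_dilatation Z U A R = (if A = U then R else if R = Z then Z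
     else if R \<notin> line Z U then dil_image Z U A R
     else dil_image Z (aux_point Z U) (dil_image Z U A (aux_point Z U)) R)"

lemma central_dilatation_center: "central_dilatation Z U A Z = Z"
  unfolding central_dilatation_def by simp

lemma central_dilatation_app:
  assumes ZU: "Z \<noteq> U" and A: "A \<in> line Z U" "A \<noteq> Z"
  shows "central_dilatation Z U A U = A"
proof (cases "A = U")
  case False
  let ?X = "aux_point Z U"
  let ?X' = "dil_image Z U A ?X"
  have X: "?X \<notin> line Z U" using aux_point_off_line[OF ZU] .
  note VX = dil_image_props[OF ZU A X]
  have ZX: "Z \<noteq> ?X" using X line_props(2)[OF ZU] by auto
  have UX: "U \<notin> line Z ?X" using not_on_line_swap[OF ZU X] .
  have "?X \<noteq> U" using X line_props(3)[OF ZU] by auto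
  then have "parl ?X' (line ?X U) = parl A (line ?X U)"
    using parl_mem_eq[OF line_props(1)] VX(2) line_sym by metis
  then have "A \<in> parl ?X' (line ?X U)" using parl_props(2)[OF line_props(1)] \<open>?X \<noteq> U\<close> by metis
  then have "dil_image Z ?X ?X' U = A" using dil_image_unique[OF ZX UX] A(1) by simp
  then show ?thesis using False ZU line_props(3)[OF ZU] unfolding central_dilatation_def by simp
qed (simp add: central_dilatation_def)

lemma central_dilatation_ray:
  assumes ZU: "Z \<noteq> U" and A: "A \<in> line Z U" "A \<noteq> Z" and Y: "Y \<noteq> Z"
  shows "central_dilatation Z U A Y \<in> line Z Y" "central_dilatation Z U A Y \<noteq> Z"
proof -
  have "central_dilatation Z U A Y \<in> line Z Y \<and> central_dilatation Z U A Y \<noteq> Z"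
  proof (cases "A \<noteq> U \<and> Y \<in> line Z U")
    case True
    let ?X = "aux_point Z U"
    have X: "?X \<notin> line Z U" using aux_point_off_line[OF ZU] .
    note VX = dil_image_props[OF ZU A X]
    have ZX: "Z \<noteq> ?X" using X line_props(2)[OF ZU] by auto
    have "Y \<notin> line Z ?X"
    proof
      assume "Y \<in> line Z ?X"
      then have "line Z ?X = line Z U"
        using line_eq_through[OF ZX _ Y[symmetric]] line_eq_through[OF ZU _ Y[symmetric]] True by metis
      then show False using X line_props(3)[OF ZX] by simp
    qed
    then show ?thesis using dil_image_props(1,3)[OF ZX VX(1,3)] True Y
      unfolding central_dilatation_def by simp
  next
    case False
    then show ?thesis using dil_image_props(1,3)[OF ZU A] line_props(3)[OF Y[symmetric]] Y
      unfolding central_dilatation_def by auto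
  qed
  then show "central_dilatation Z U A Y \<in> line Z Y" "central_dilatation Z U A Y \<noteq> Z" by simp_all
qed

lemma central_dilatation_eq_dil_image:
  assumes large: "\<not> two_line_cover" and ZU: "Z \<noteq> U" and A: "A \<in> line Z U" "A \<noteq> Z" and AU: "A \<noteq> U"
    and W: "W \<notin> line Z U" and Y: "Y \<noteq> Z" "Y \<notin> line Z W"
  shows "central_dilatation Z U A Y = dil_image Z W (dil_image Z U A W) Y"
proof (cases "Y \<in> line Z U")
  case False
  then show ?thesis
    using dil_image_transfer[OF ZU A AU W False Y(2)] AU Y(1) unfolding central_dilatation_def by simp
next
  case True
  let ?l = "line Z U" and ?X = "aux_point Z U"
  have X: "?X \<notin> ?l" using aux_point_off_line[OF ZU] .
  have ZX: "Z \<noteq> ?X" using X line_props(2)[OF ZU] by auto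
  have off: "Y \<notin> line Z V" if "V \<notin> ?l" for V
    using not_on_line_swap[OF Y(1)[symmetric]] that line_eq_through[OF ZU True Y(1)[symmetric]] by simp
  have on_line: "central_dilatation Z U A Y = dil_image Z V (dil_image Z U A V) Y"
    if "V \<notin> ?l" "V \<notin> line Z ?X" for V
    using dil_image_change_base[OF ZU A AU X that off[OF X] off[OF that(1)]] True AU Y(1)
    unfolding central_dilatation_def by simp
  show ?thesis
  proof (cases "W \<in> line Z ?X")
    case False
    then show ?thesis using on_line[OF W] by simp
  next
    case True
    obtain V where V: "V \<notin> ?l" "V \<notin> line Z ?X"
      using point_off_two_lines[OF large line_props(1)[OF ZU] line_props(1)[OF ZX]] .
    have ZW: "Z \<noteq> W" using W line_props(2)[OF ZU] by auto
    have WV: "W \<notin> line Z V"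
    proof
      assume "W \<in> line Z V"
      then have "line Z V = line Z ?X"
        using line_eq_through[OF _ _ ZW] line_props(2)[OF ZU] V(1) True ZX by metis
      then show False using V(2) line_props(3) V(1) line_props(2)[OF ZU] by metis
    qed
    then show ?thesis
      using on_line[OF V] dil_image_change_base[OF ZU A AU V(1) W WV off[OF V(1)] Y(2)] by simp
  qed
qed

lemma central_dilatation_dilatation:
  assumes large: "\<not> two_line_cover" and ZU: "Z \<noteq> U" and A: "A \<in> line Z U" "A \<noteq> Z"
  shows "is_dilatation (central_dilatation Z U A)"
proof (cases "A = U")
  case True
  then have "central_dilatation Z U A = id" by (auto simp: central_dilatation_def)
  then show ?thesis using dilatation_id by simp
next
  case AU: False
  let ?l = "line Z U" and ?d = "central_dilatation Z U A"
  have ray: "?d T \<noteq> Z" "line Z (?d T) = line Z T" if "T \<noteq> Z" for T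
    using central_dilatation_ray[OF ZU A that] line_eq_through[OF that[symmetric]] by simp_all
  show ?thesis
    unfolding is_dilatation_def
  proof (intro allI impI)
    fix R S :: 'p
    assume RS: "R \<noteq> S"
    show "?d R \<noteq> ?d S \<and> line R S \<parallel> line (?d R) (?d S)"
    proof (cases "R = Z \<or> S = Z")
      case True
      then show ?thesis
        using ray RS central_dilatation_center line_sym par_refl line_props(1) by (metis (full_types))
    next
      case nZ: False
      show ?thesis
      proof (cases "R \<in> ?l \<or> S \<in> ?l")
        case False
        then show ?thesis
          using dil_image_inj[OF ZU A _ _ RS] dil_image_par[OF ZU A AU _ _ RS] nZ AU
          unfolding central_dilatation_def by simp
      next
        case True
        then obtain W where W: "W \<notin> ?l" "R \<notin> line Z W" "S \<notin> line Z W"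
          using point_off_line_and_rays[OF large ZU] nZ by metis
        have ZW: "Z \<noteq> W" using W(1) line_props(2)[OF ZU] by auto
        note VW = dil_image_props[OF ZU A W(1)]
        show ?thesis
          using dil_image_inj[OF ZW VW(1,3) W(2,3) RS] dil_image_par[OF ZW VW(1,3) VW(5)[OF AU] W(2,3) RS]
            central_dilatation_eq_dil_image[OF large ZU A AU W(1)] nZ W(2,3) by simp
      qed
    qed
  qed
qed

end

section \<open>The skew field operations\<close>

context affine_incidence
begin

lemma sf_add_unfold:
  "sf_add L Z U A B = meet (line Z U)
     (parl (meet (parl (aux_point Z U) (line Z U)) (parl A (line Z (aux_point Z U)))) (line B (aux_point Z U)))"
  unfolding sf_add_def aux_point_def Let_def by simp

lemma sf_mul_unfold:
  "sf_mul L Z U A B = meet (line Z U)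
     (parl (meet (parl A (line U (aux_point Z U))) (line Z (aux_point Z U))) (line B (aux_point Z U)))"
  unfolding sf_mul_def aux_point_def Let_def by simp

lemma nonpar_parl: "m \<in> L \<Longrightarrow> \<not> l \<parallel> m \<Longrightarrow> \<not> l \<parallel> parl P m"
  using par_trans parl_props(3) by blast

lemma line_off_nonpar:
  assumes "A \<noteq> B" "X \<notin> line A B" "C \<in> line A B" shows "\<not> line A B \<parallel> line C X"
proof
  assume "line A B \<parallel> line C X"
  then have "line A B = line C X" using par_common_point assms(2,3) line_props(2)[of C X] by blast
  then show False using assms(2) line_props(3)[of C X] assms(3) by (cases "C = X") auto
qed

lemma meet_line_parl:
  assumes ZU: "Z \<noteq> U" and X: "X \<notin> line Z U" and B: "B \<in> line Z U"
  shows "meet (line Z U) (parl P (line B X)) \<in> line Z U"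
    "meet (line Z U) (parl P (line B X)) \<in> parl P (line B X)"
    "T \<in> line Z U \<Longrightarrow> T \<in> parl P (line B X) \<Longrightarrow> meet (line Z U) (parl P (line B X)) = T"
proof -
  have BX: "B \<noteq> X" using B X by auto
  note lBX = line_props[OF BX]
  have np: "\<not> line Z U \<parallel> parl P (line B X)"
    using nonpar_parl[OF lBX(1) line_off_nonpar[OF ZU X B]] .
  show "meet (line Z U) (parl P (line B X)) \<in> line Z U" "meet (line Z U) (parl P (line B X)) \<in> parl P (line B X)"
    using meet_props[OF line_props(1)[OF ZU] parl_props(1)[OF lBX(1)] np] by simp_all
  show "T \<in> line Z U \<Longrightarrow> T \<in> parl P (line B X) \<Longrightarrow> meet (line Z U) (parl P (line B X)) = T"
    using meet_eq_nonpar[OF line_props(1)[OF ZU] parl_props(1)[OF lBX(1)] np] by simp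
qed

lemma sf_add_in: "Z \<noteq> U \<Longrightarrow> B \<in> line Z U \<Longrightarrow> sf_add L Z U A B \<in> line Z U"
  unfolding sf_add_unfold using meet_line_parl(1)[OF _ aux_point_off_line] by simp

lemma sf_mul_in: "Z \<noteq> U \<Longrightarrow> B \<in> line Z U \<Longrightarrow> sf_mul L Z U A B \<in> line Z U"
  unfolding sf_mul_unfold using meet_line_parl(1)[OF _ aux_point_off_line] by simp

lemma sf_add_pivot:
  assumes ZU: "Z \<noteq> U" and X: "X \<notin> line Z U" and A: "A \<in> line Z U"
  shows "meet (parl X (line Z U)) (parl A (line Z X)) \<in> parl A (line Z X)"
    "meet (parl X (line Z U)) (parl A (line Z X)) \<notin> line Z U"
proof -
  note l = line_props[OF ZU]
  have ZX: "Z \<noteq> X" using X l by auto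
  have "\<not> parl X (line Z U) \<parallel> parl A (line Z X)"
    using nonpar_cong[OF line_off_nonpar[OF ZU X l(2)] par_sym[OF parl_props(3)[OF l(1)]]
        par_sym[OF parl_props(3)[OF line_props(1)[OF ZX]]]] .
  note m = meet_props[OF parl_props(1)[OF l(1)] parl_props(1)[OF line_props(1)[OF ZX]] this]
  then show "meet (parl X (line Z U)) (parl A (line Z X)) \<in> parl A (line Z X)"
    "meet (parl X (line Z U)) (parl A (line Z X)) \<notin> line Z U"
    using parl_disjoint[OF l(1) X] by auto
qed

lemma sf_add_left_cancel:
  assumes ZU: "Z \<noteq> U" and A: "A \<in> line Z U" and B: "B \<in> line Z U" "B' \<in> line Z U"
    and e: "sf_add L Z U A B = sf_add L Z U A B'"
  shows "B = B'"
proof (rule ccontr)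
  assume BB: "B \<noteq> B'"
  define X where "X = aux_point Z U"
  have X: "X \<notin> line Z U" using aux_point_off_line[OF ZU] X_def by simp
  define P where "P = meet (parl X (line Z U)) (parl A (line Z X))"
  have P: "P \<notin> line Z U" using sf_add_pivot(2)[OF ZU X A] P_def by simp
  define S where "S = sf_add L Z U A B"
  have S1: "S = meet (line Z U) (parl P (line B X))" and S2: "S = meet (line Z U) (parl P (line B' X))"
    using e unfolding S_def sf_add_unfold X_def[symmetric] P_def[symmetric] by simp_all
  have S: "S \<in> parl P (line B X)" "S \<in> parl P (line B' X)"
    using meet_line_parl(2)[OF ZU X B(1), of P, folded S1] meet_line_parl(2)[OF ZU X B(2), of P, folded S2]
    by simp_all
  have BX: "B \<noteq> X" "B' \<noteq> X" using B X by auto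
  note lB = line_props[OF BX(1)] and lB' = line_props[OF BX(2)]
  have "parl P (line B X) = parl S (line B X)" "parl P (line B' X) = parl S (line B' X)"
    using parl_mem_eq[OF lB(1) S(1)] parl_mem_eq[OF lB'(1) S(2)] by simp_all
  moreover have "S \<noteq> P" using sf_add_in[OF ZU B(1)] P unfolding S_def by auto
  ultimately have "parl P (line B X) = parl P (line B' X)"
    using line_unique[OF parl_props(1)[OF lB(1)] parl_props(1)[OF lB'(1)] parl_props(2)[OF lB(1)]
        parl_props(2)[OF lB'(1)]] S by metis
  then have "line B X \<parallel> line B' X"
    using parl_props(3)[OF lB(1), of P] parl_props(3)[OF lB'(1), of P] par_trans par_sym by metis
  then have "line B X = line B' X" using par_common_point lB(3) lB'(3) by blast
  then have "line B X = line Z U" using line_eq[OF line_props(1)[OF ZU] B(1) B(2) BB] lB'(2) line_eq[OF lB(1) lB(2)] BB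
    by metis
  then show False using X lB(3) by simp
qed

lemma sf_add_zero_left:
  assumes ZU: "Z \<noteq> U" and B: "B \<in> line Z U" shows "sf_add L Z U Z B = B"
proof -
  define X where "X = aux_point Z U"
  have X: "X \<notin> line Z U" using aux_point_off_line[OF ZU] X_def by simp
  note l = line_props[OF ZU]
  have ZX: "Z \<noteq> X" using X l by auto
  note lZX = line_props[OF ZX]
  have "parl X (line Z U) \<noteq> line Z X" using parl_disjoint[OF l(1) X] lZX(2) l(2) by auto
  then have "meet (parl X (line Z U)) (parl Z (line Z X)) = X"
    using meet_eq[OF parl_props(1)[OF l(1)] lZX(1) _ parl_props(2)[OF l(1)] lZX(3)] parl_self[OF lZX(1,2)]
    by simp
  moreover have "B \<in> parl X (line B X)" using parl_self[OF line_props(1,3)] B X by (metis line_props(2))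
  ultimately show ?thesis
    unfolding sf_add_unfold X_def[symmetric] using meet_line_parl(3)[OF ZU X B B] by simp
qed

lemma sf_add_zero_right:
  assumes ZU: "Z \<noteq> U" and A: "A \<in> line Z U" shows "sf_add L Z U A Z = A"
proof -
  define X where "X = aux_point Z U"
  have X: "X \<notin> line Z U" using aux_point_off_line[OF ZU] X_def by simp
  have ZX: "Z \<noteq> X" using X line_props[OF ZU] by auto
  define P where "P = meet (parl X (line Z U)) (parl A (line Z X))"
  have "parl P (line Z X) = parl A (line Z X)"
    using parl_mem_eq[OF line_props(1)[OF ZX] sf_add_pivot(1)[OF ZU X A]] P_def by simp
  then have "A \<in> parl P (line Z X)" using parl_props(2)[OF line_props(1)[OF ZX]] by simp
  then show ?thesis
    unfolding sf_add_unfold X_def[symmetric] P_def[symmetric]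
    using meet_line_parl(3)[OF ZU X line_props(2)[OF ZU] A] by simp
qed

lemma sf_mul_pivot:
  assumes ZU: "Z \<noteq> U" and X: "X \<notin> line Z U"
  shows "meet (parl A (line U X)) (line Z X) \<in> parl A (line U X)"
    "meet (parl A (line U X)) (line Z X) \<in> line Z X"
    "T \<in> parl A (line U X) \<Longrightarrow> T \<in> line Z X \<Longrightarrow> meet (parl A (line U X)) (line Z X) = T"
proof -
  note l = line_props[OF ZU]
  have UX: "U \<noteq> X" and ZX: "Z \<noteq> X" using X l by auto
  have "line U X \<noteq> line Z X"
    using line_eq[OF line_props(1)[OF ZX] _ _ ZU] line_props(2,3)[OF UX] line_props(2)[OF ZX] X l(3) by metis
  then have "\<not> line U X \<parallel> line Z X" using par_common_point line_props(3)[OF UX] line_props(3)[OF ZX] by blast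
  then have np: "\<not> parl A (line U X) \<parallel> line Z X"
    using nonpar_cong[OF _ par_sym[OF parl_props(3)] par_refl] line_props(1) UX ZX by metis
  show "meet (parl A (line U X)) (line Z X) \<in> parl A (line U X)" "meet (parl A (line U X)) (line Z X) \<in> line Z X"
    using meet_props[OF parl_props(1)[OF line_props(1)[OF UX]] line_props(1)[OF ZX] np] by simp_all
  show "T \<in> parl A (line U X) \<Longrightarrow> T \<in> line Z X \<Longrightarrow> meet (parl A (line U X)) (line Z X) = T"
    using meet_eq_nonpar[OF parl_props(1)[OF line_props(1)[OF UX]] line_props(1)[OF ZX] np] by simp
qed

lemma sf_mul_zero_left:
  assumes ZU: "Z \<noteq> U" and B: "B \<in> line Z U" shows "sf_mul L Z U Z B = Z"
proof -
  define X where "X = aux_point Z U"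
  have X: "X \<notin> line Z U" using aux_point_off_line[OF ZU] X_def by simp
  have UX: "U \<noteq> X" and ZX: "Z \<noteq> X" using X line_props[OF ZU] by auto
  have BX: "B \<noteq> X" using B X by auto
  have "meet (parl Z (line U X)) (line Z X) = Z"
    using sf_mul_pivot(3)[OF ZU X parl_props(2)[OF line_props(1)[OF UX]] line_props(2)[OF ZX]] .
  then show ?thesis
    unfolding sf_mul_unfold X_def[symmetric]
    using meet_line_parl(3)[OF ZU X B line_props(2)[OF ZU] parl_props(2)[OF line_props(1)[OF BX]]] by simp
qed

lemma sf_mul_zero_right:
  assumes ZU: "Z \<noteq> U" shows "sf_mul L Z U A Z = Z"
proof -
  define X where "X = aux_point Z U"
  have X: "X \<notin> line Z U" using aux_point_off_line[OF ZU] X_def by simp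
  have ZX: "Z \<noteq> X" using X line_props[OF ZU] by auto
  define P where "P = meet (parl A (line U X)) (line Z X)"
  have "parl P (line Z X) = line Z X"
    using parl_self[OF line_props(1)[OF ZX] sf_mul_pivot(2)[OF ZU X]] P_def by simp
  then show ?thesis
    unfolding sf_mul_unfold X_def[symmetric] P_def[symmetric]
    using meet_line_parl(3)[OF ZU X line_props(2)[OF ZU] line_props(2)[OF ZU], of P] line_props(2)[OF ZX]
    by simp
qed

lemma sf_mul_one_right:
  assumes ZU: "Z \<noteq> U" and A: "A \<in> line Z U" shows "sf_mul L Z U A U = A"
proof -
  define X where "X = aux_point Z U"
  have X: "X \<notin> line Z U" using aux_point_off_line[OF ZU] X_def by simp
  have UX: "U \<noteq> X" using X line_props[OF ZU] by auto
  define P where "P = meet (parl A (line U X)) (line Z X)"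
  have "parl P (line U X) = parl A (line U X)"
    using parl_mem_eq[OF line_props(1)[OF UX] sf_mul_pivot(1)[OF ZU X]] P_def by simp
  then show ?thesis
    unfolding sf_mul_unfold X_def[symmetric] P_def[symmetric]
    using meet_line_parl(3)[OF ZU X line_props(3)[OF ZU] A] parl_props(2)[OF line_props(1)[OF UX]] by simp
qed

end

context desarguesian
begin

text \<open>The last step of both constructions, with the pivot point written as the image of the
  auxiliary point \<open>X\<close> under a dilatation.\<close>

lemma meet_line_parl_dilatation:
  assumes ZU: "Z \<noteq> U" and X: "X \<notin> line Z U" and B: "B \<in> line Z U"
    and \<sigma>: "is_dilatation \<sigma>" "\<sigma> B \<in> line Z U"
  shows "meet (line Z U) (parl (\<sigma> X) (line B X)) = \<sigma> B"
proof -
  have BX: "B \<noteq> X" using B X by auto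
  have "\<sigma> B \<in> parl (\<sigma> X) (line B X)" using dilatation_parl[OF \<sigma>(1) BX[symmetric]] line_sym by metis
  then show ?thesis using meet_line_parl(3)[OF ZU X B \<sigma>(2)] by simp
qed

lemma sf_add_eq_translation:
  assumes large: "\<not> two_line_cover" and ZU: "Z \<noteq> U" and A: "A \<in> line Z U" and B: "B \<in> line Z U"
  shows "sf_add L Z U A B = translation Z A B"
proof -
  define X where "X = aux_point Z U"
  have X: "X \<notin> line Z U" using aux_point_off_line[OF ZU] X_def by simp
  note l = line_props[OF ZU]
  have ZX: "Z \<noteq> X" using X l by auto
  let ?t = "translation Z A"
  have dt: "is_dilatation ?t" using is_translation_translation[OF large] unfolding is_translation_def by simp
  have trace: "?t Y \<in> parl Y (line Z U)" for Y
    using translation_moves_along(1)[of Z A Y] line_eq[OF l(1,2) A] parl_props(2)[OF l(1)] translation_refl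
    by (cases "Z = A") auto
  have "?t X \<in> parl A (line Z X)" using dilatation_parl[OF dt ZX] translation_app by simp
  moreover have "?t X \<in> parl X (line Z U)" using trace .
  moreover have "\<not> parl X (line Z U) \<parallel> parl A (line Z X)"
    using nonpar_cong[OF line_off_nonpar[OF ZU X l(2)] par_sym[OF parl_props(3)[OF l(1)]]
        par_sym[OF parl_props(3)[OF line_props(1)[OF ZX]]]] .
  ultimately have "meet (parl X (line Z U)) (parl A (line Z X)) = ?t X"
    using meet_eq_nonpar[OF parl_props(1)[OF l(1)] parl_props(1)[OF line_props(1)[OF ZX]]] by simp
  moreover have "?t B \<in> line Z U" using translation_on_line[OF l(1,2) A B] .
  ultimately show ?thesis
    unfolding sf_add_unfold X_def[symmetric] using meet_line_parl_dilatation[OF ZU X B dt] by simp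
qed

lemma sf_mul_eq_central_dilatation:
  assumes large: "\<not> two_line_cover" and ZU: "Z \<noteq> U" and A: "A \<in> line Z U" "A \<noteq> Z"
    and B: "B \<in> line Z U"
  shows "sf_mul L Z U A B = central_dilatation Z U A B"
proof -
  define X where "X = aux_point Z U"
  have X: "X \<notin> line Z U" using aux_point_off_line[OF ZU] X_def by simp
  note l = line_props[OF ZU]
  have UX: "U \<noteq> X" and ZX: "Z \<noteq> X" using X l by auto
  let ?d = "central_dilatation Z U A"
  have dd: "is_dilatation ?d" using central_dilatation_dilatation[OF large ZU A] .
  have "?d X \<in> parl A (line U X)" using dilatation_parl[OF dd UX] central_dilatation_app[OF ZU A] by simp
  moreover have "?d X \<in> line Z X" using central_dilatation_ray(1)[OF ZU A ZX[symmetric]] .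
  ultimately have "meet (parl A (line U X)) (line Z X) = ?d X" using sf_mul_pivot(3)[OF ZU X] by simp
  moreover have "?d B \<in> line Z U"
    using central_dilatation_ray(1)[OF ZU A] line_eq_through[OF ZU B] central_dilatation_center l(2)
    by (cases "B = Z") auto
  ultimately show ?thesis
    unfolding sf_mul_unfold X_def[symmetric] using meet_line_parl_dilatation[OF ZU X B dd] by simp
qed

lemma sf_neg_ex1:
  assumes large: "\<not> two_line_cover" and ZU: "Z \<noteq> U" and X: "X \<in> line Z U"
  shows "\<exists>!Y. Y \<in> line Z U \<and> sf_add L Z U X Y = Z"
proof (rule ex_ex1I)
  have Y: "translation X Z Z \<in> line Z U" using translation_on_line[OF line_props(1)[OF ZU] X line_props(2,2)[OF ZU]] .
  have "sf_add L Z U X (translation X Z Z) = Z"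
    using sf_add_eq_translation[OF large ZU X Y] fun_cong[OF translation_inverse[OF large, of Z X], of Z]
    by simp
  then show "\<exists>Y. Y \<in> line Z U \<and> sf_add L Z U X Y = Z" using Y by blast
next
  fix Y1 Y2
  assume "Y1 \<in> line Z U \<and> sf_add L Z U X Y1 = Z" "Y2 \<in> line Z U \<and> sf_add L Z U X Y2 = Z"
  then show "Y1 = Y2" using sf_add_left_cancel[OF ZU X] by auto
qed

lemma sf_neg_props:
  assumes "\<not> two_line_cover" "Z \<noteq> U" "X \<in> line Z U"
  shows "sf_neg L Z U X \<in> line Z U" "sf_add L Z U X (sf_neg L Z U X) = Z"
  using theI'[OF sf_neg_ex1[OF assms]] unfolding sf_neg_def by auto

lemma sf_inv_ex1:
  assumes large: "\<not> two_line_cover" and ZU: "Z \<noteq> U" and X: "X \<in> line Z U" "X \<noteq> Z"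
  shows "\<exists>!Y. Y \<in> line Z U \<and> sf_mul L Z U X Y = U"
proof (rule ex_ex1I)
  note l = line_props[OF ZU]
  have ZX: "Z \<noteq> X" using X by auto
  have U': "U \<in> line Z X" "U \<noteq> Z" using line_eq[OF l(1) l(2) X(1) ZX] l(3) ZU by auto
  define Y where "Y = central_dilatation Z X U U"
  have Yl: "Y \<in> line Z U" using central_dilatation_ray(1)[OF ZX U' ZU[symmetric]] Y_def by simp
  have "central_dilatation Z U X \<circ> central_dilatation Z X U = id"
    by (rule dilatation_eq_two_points[OF dilatation_comp[OF central_dilatation_dilatation[OF large ZU X]
          central_dilatation_dilatation[OF large ZX U']] dilatation_id ZX])
      (simp_all add: central_dilatation_center central_dilatation_app[OF ZU X] central_dilatation_app[OF ZX U'])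
  then have "central_dilatation Z U X Y = U" using Y_def by (metis comp_apply id_apply)
  then have "sf_mul L Z U X Y = U" using sf_mul_eq_central_dilatation[OF large ZU X Yl] by simp
  then show "\<exists>Y. Y \<in> line Z U \<and> sf_mul L Z U X Y = U" using Yl by blast
next
  fix Y1 Y2
  assume "Y1 \<in> line Z U \<and> sf_mul L Z U X Y1 = U" "Y2 \<in> line Z U \<and> sf_mul L Z U X Y2 = U"
  then have "central_dilatation Z U X Y1 = central_dilatation Z U X Y2"
    using sf_mul_eq_central_dilatation[OF large ZU X, of Y1] sf_mul_eq_central_dilatation[OF large ZU X, of Y2]
    by simp
  then show "Y1 = Y2" using dilatationD[OF central_dilatation_dilatation[OF large ZU X]] by blast
qed

lemma sf_inv_props:
  assumes "\<not> two_line_cover" "Z \<noteq> U" "X \<in> line Z U" "X \<noteq> Z"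
  shows "sf_inv L Z U X \<in> line Z U" "sf_mul L Z U X (sf_inv L Z U X) = U"
  using theI'[OF sf_inv_ex1[OF assms]] unfolding sf_inv_def by auto

lemma sf_sub_props:
  assumes large: "\<not> two_line_cover" and ZU: "Z \<noteq> U" and B: "B \<in> line Z U" and C: "C \<in> line Z U"
  shows "sf_sub L Z U B C \<in> line Z U" "B \<noteq> C \<Longrightarrow> sf_sub L Z U B C \<noteq> Z"
proof -
  define N where "N = sf_neg L Z U C"
  note N = sf_neg_props[OF large ZU C, folded N_def]
  show "sf_sub L Z U B C \<in> line Z U" unfolding sf_sub_def N_def[symmetric] using sf_add_in[OF ZU N(1)] .
  assume BC: "B \<noteq> C"
  show "sf_sub L Z U B C \<noteq> Z"
  proof
    assume "sf_sub L Z U B C = Z"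
    then have "translation Z B N = translation Z C N"
      using N(2) sf_add_eq_translation[OF large ZU B N(1)] sf_add_eq_translation[OF large ZU C N(1)]
      unfolding sf_sub_def N_def[symmetric] by simp
    then have "translation Z B = translation Z C"
      using translation_eq_one_point[OF is_translation_translation[OF large] is_translation_translation[OF large]]
      by blast
    then show False using BC translation_app by metis
  qed
qed

end

section \<open>Parallel projections\<close>

context affine_incidence
begin

definition proj :: "'p set \<Rightarrow> 'p set \<Rightarrow> 'p \<Rightarrow> 'p" where
  "proj l2 d Y = meet l2 (parl Y d)"

lemma proj_props:
  assumes l2: "l2 \<in> L" and d: "d \<in> L" "\<not> d \<parallel> l2"
  shows "proj l2 d Y \<in> l2" "proj l2 d Y \<in> parl Y d"
    "W \<in> l2 \<Longrightarrow> W \<in> parl Y d \<Longrightarrow> proj l2 d Y = W"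
proof -
  have np: "\<not> l2 \<parallel> parl Y d" using nonpar_parl[OF d(1)] d(2) par_sym by blast
  show "proj l2 d Y \<in> l2" "proj l2 d Y \<in> parl Y d"
    unfolding proj_def using meet_props[OF l2 parl_props(1)[OF d(1)] np] by simp_all
  show "W \<in> l2 \<Longrightarrow> W \<in> parl Y d \<Longrightarrow> proj l2 d Y = W"
    unfolding proj_def using meet_eq_nonpar[OF l2 parl_props(1)[OF d(1)] np] by simp
qed

lemma proj_inj_on:
  assumes l2: "l2 \<in> L" and d: "d \<in> L" "\<not> d \<parallel> l2" and l1: "l1 \<in> L" "\<not> d \<parallel> l1"
    and XY: "X \<in> l1" "Y \<in> l1" and e: "proj l2 d X = proj l2 d Y"
  shows "X = Y"
proof -
  have "parl X d = parl Y d"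
    using parl_mem_eq[OF d(1) proj_props(2)[OF l2 d, of X]] parl_mem_eq[OF d(1) proj_props(2)[OF l2 d, of Y]] e
    by simp
  moreover have "\<not> l1 \<parallel> parl X d" using nonpar_parl[OF d(1)] l1(2) par_sym by blast
  ultimately show ?thesis
    using nonpar_common_point_unique[OF _ l1(1) parl_props(1)[OF d(1)] XY(1) parl_props(2)[OF d(1)] XY(2)]
      parl_props(2)[OF d(1), of Y] by simp
qed

lemma dilatation_parl_direction:
  assumes \<rho>: "is_dilatation \<rho>" and d: "d \<in> L" and W: "W \<in> parl Y d"
  shows "\<rho> W \<in> parl (\<rho> Y) d"
proof (cases "W = Y")
  case True then show ?thesis using parl_props(2)[OF d] by simp
next
  case False
  have "line Y W \<parallel> d" using line_eq_parl(2)[OF d W] False by simp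
  then show ?thesis using dilatation_parl[OF \<rho> False[symmetric]] parl_par_cong by simp
qed

end

context desarguesian
begin

lemma translation_parl_direction:
  assumes d: "d \<in> L" and W: "W \<in> parl Z d"
  shows "translation Z W Y \<in> parl Y d"
proof (cases "Z = W")
  case True then show ?thesis using translation_refl parl_props(2)[OF d] by simp
next
  case False
  have "line Z W \<parallel> d" using line_eq_parl(2)[OF d W] False by simp
  then show ?thesis using translation_moves_along(1)[OF False, of Y] parl_par_cong by simp
qed

context
  fixes l2 d :: "'p set"
  assumes large: "\<not> two_line_cover" and l2: "l2 \<in> L" and d: "d \<in> L" "\<not> d \<parallel> l2"
begin

lemma proj_translation:
  "proj l2 d (translation Z A B) = translation (proj l2 d Z) (proj l2 d A) (proj l2 d B)"
proof -
  let ?h = "proj l2 d"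
  note h = proj_props[OF l2 d]
  define \<tau> where "\<tau> = translation Z A"
  define \<tau>' where "\<tau>' = translation (?h Z) (?h A)"
  define \<kappa> where "\<kappa> = translation Z (?h Z)"
  define \<mu> where "\<mu> = translation A (?h A)"
  have tr: "is_translation \<tau>" "is_translation \<tau>'" "is_translation \<kappa>" "is_translation \<mu>"
    unfolding \<tau>_def \<tau>'_def \<kappa>_def \<mu>_def using is_translation_translation[OF large] by simp_all
  have along: "\<kappa> Y \<in> parl Y d" "\<mu> Y \<in> parl Y d" for Y
    unfolding \<kappa>_def \<mu>_def using translation_parl_direction[OF d(1) h(2)] by simp_all
  \<comment> \<open>both sides are translations taking \<open>Z\<close> to the projection of \<open>A\<close>\<close>
  have comm: "\<tau>' \<circ> \<kappa> = \<mu> \<circ> \<tau>"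
    using translation_eq_one_point[OF is_translation_comp[OF large tr(2,3)] is_translation_comp[OF large tr(4,1)],
        of Z]
      translation_app unfolding \<tau>_def \<tau>'_def \<kappa>_def \<mu>_def by simp
  have "\<tau>' (\<kappa> B) = \<mu> (\<tau> B)" using fun_cong[OF comm, of B] by simp
  then have "\<tau>' (\<kappa> B) \<in> parl (\<tau> B) d" using along(2)[of "\<tau> B"] by simp
  moreover have "?h B \<in> parl (\<kappa> B) d" using parl_mem_eq[OF d(1) along(1)] h(2) by simp
  then have "\<tau>' (?h B) \<in> parl (\<tau>' (\<kappa> B)) d"
    using dilatation_parl_direction[OF _ d(1)] tr(2) unfolding is_translation_def by blast
  ultimately have "\<tau>' (?h B) \<in> parl (\<tau> B) d" using parl_mem_eq[OF d(1), of "\<tau>' (\<kappa> B)" "\<tau> B"] by simp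
  moreover have "\<tau>' (?h B) \<in> l2" unfolding \<tau>'_def using translation_on_line[OF l2 h(1) h(1) h(1)] .
  ultimately show ?thesis using h(3)[of "\<tau>' (?h B)" "\<tau> B"] unfolding \<tau>_def \<tau>'_def by blast
qed

text \<open>This works because the translation from \<open>Z\<close> to its projection moves every point along \<open>d\<close>.\<close>

lemma proj_conjugate_dilatation:
  assumes \<delta>: "is_dilatation \<delta>" and centre: "\<delta> Z = Z"
  defines "\<delta>' \<equiv> translation Z (proj l2 d Z) \<circ> \<delta> \<circ> translation (proj l2 d Z) Z"
  shows "is_dilatation \<delta>'" "\<delta>' (proj l2 d Z) = proj l2 d Z" "proj l2 d (\<delta> Y) = \<delta>' (proj l2 d Y)"
proof -
  let ?h = "proj l2 d"
  note h = proj_props[OF l2 d]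
  show dil': "is_dilatation \<delta>'"
    unfolding \<delta>'_def using dilatation_comp \<delta> is_translation_translation[OF large]
    unfolding is_translation_def by blast
  show fix': "\<delta>' (?h Z) = ?h Z" unfolding \<delta>'_def using centre by (simp add: translation_app)
  have Z': "Z \<in> parl (?h Z) d" using parl_mem_eq[OF d(1) h(2), of Z] parl_props(2)[OF d(1), of Z] by simp
  have "translation (?h Z) Z (?h Y) \<in> parl Y d"
    using translation_parl_direction[OF d(1) Z', of "?h Y"] parl_mem_eq[OF d(1) h(2)] by simp
  then have "\<delta> (translation (?h Z) Z (?h Y)) \<in> parl (\<delta> Y) d"
    using dilatation_parl_direction[OF \<delta> d(1)] by blast
  moreover have "\<delta>' (?h Y) \<in> parl (\<delta> (translation (?h Z) Z (?h Y))) d"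
    using translation_parl_direction[OF d(1) h(2)] unfolding \<delta>'_def by simp
  ultimately have "\<delta>' (?h Y) \<in> parl (\<delta> Y) d"
    using parl_mem_eq[OF d(1), of "\<delta> (translation (?h Z) Z (?h Y))" "\<delta> Y"] by simp
  moreover have "\<delta>' (?h Y) \<in> l2"
  proof (cases "?h Y = ?h Z")
    case True
    then show ?thesis using fix' h(1) by simp
  next
    case False
    then show ?thesis
      using dilatation_fixpoint_line[OF dil' fix' False] line_eq[OF l2 h(1) h(1) False[symmetric]] by simp
  qed
  ultimately show "?h (\<delta> Y) = \<delta>' (?h Y)" using h(3)[of "\<delta>' (?h Y)" "\<delta> Y"] by blast
qed

context
  fixes Z U :: 'p
  assumes ZU: "Z \<noteq> U" and d1: "\<not> d \<parallel> line Z U"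
begin

lemma proj_inj:
  "X \<in> line Z U \<Longrightarrow> Y \<in> line Z U \<Longrightarrow> proj l2 d X = proj l2 d Y \<Longrightarrow> X = Y"
  using proj_inj_on[OF l2 d line_props(1)[OF ZU] d1] by blast

lemma proj_zero_ne_one: "proj l2 d Z \<noteq> proj l2 d U"
  using proj_inj line_props(2,3)[OF ZU] ZU by blast

lemma proj_in_line: "proj l2 d X \<in> line (proj l2 d Z) (proj l2 d U)"
  using line_eq[OF l2 proj_props(1)[OF l2 d] proj_props(1)[OF l2 d] proj_zero_ne_one] proj_props(1)[OF l2 d]
  by simp

lemma proj_central_dilatation:
  assumes A: "A \<in> line Z U" "A \<noteq> Z"
  shows "proj l2 d (central_dilatation Z U A B)
    = central_dilatation (proj l2 d Z) (proj l2 d U) (proj l2 d A) (proj l2 d B)"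
proof -
  let ?h = "proj l2 d"
  define \<delta>' where "\<delta>' = translation Z (?h Z) \<circ> central_dilatation Z U A \<circ> translation (?h Z) Z"
  note conj = proj_conjugate_dilatation[OF central_dilatation_dilatation[OF large ZU A] central_dilatation_center,
      folded \<delta>'_def]
  have A': "?h A \<noteq> ?h Z" using proj_inj[OF A(1) line_props(2)[OF ZU]] A(2) by blast
  have "\<delta>' (?h U) = ?h A" using conj(3)[of U] central_dilatation_app[OF ZU A] by simp
  then have "\<delta>' = central_dilatation (?h Z) (?h U) (?h A)"
    by (intro dilatation_eq_two_points[OF conj(1) central_dilatation_dilatation[OF large proj_zero_ne_one
          proj_in_line A'] proj_zero_ne_one])
      (simp_all add: conj(2) central_dilatation_center central_dilatation_app[OF proj_zero_ne_one proj_in_line A'])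
  then show ?thesis using conj(3) by simp
qed

lemma proj_sf_add:
  assumes "X \<in> line Z U" "Y \<in> line Z U"
  shows "proj l2 d (sf_add L Z U X Y) = sf_add L (proj l2 d Z) (proj l2 d U) (proj l2 d X) (proj l2 d Y)"
  using sf_add_eq_translation[OF large ZU assms] proj_translation
    sf_add_eq_translation[OF large proj_zero_ne_one proj_in_line proj_in_line] by simp

lemma proj_sf_mul:
  assumes X: "X \<in> line Z U" and Y: "Y \<in> line Z U"
  shows "proj l2 d (sf_mul L Z U X Y) = sf_mul L (proj l2 d Z) (proj l2 d U) (proj l2 d X) (proj l2 d Y)"
proof (cases "X = Z")
  case True
  then show ?thesis using sf_mul_zero_left[OF ZU Y] sf_mul_zero_left[OF proj_zero_ne_one proj_in_line] by simp
next
  case False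
  have "proj l2 d X \<noteq> proj l2 d Z" using proj_inj[OF X line_props(2)[OF ZU]] False by blast
  then show ?thesis
    using sf_mul_eq_central_dilatation[OF large ZU X False Y] proj_central_dilatation[OF X False]
      sf_mul_eq_central_dilatation[OF large proj_zero_ne_one proj_in_line _ proj_in_line] by simp
qed

lemma proj_sf_neg:
  assumes X: "X \<in> line Z U"
  shows "proj l2 d (sf_neg L Z U X) = sf_neg L (proj l2 d Z) (proj l2 d U) (proj l2 d X)"
proof -
  note N = sf_neg_props[OF large ZU X]
  have "sf_add L (proj l2 d Z) (proj l2 d U) (proj l2 d X) (proj l2 d (sf_neg L Z U X)) = proj l2 d Z"
    using proj_sf_add[OF X N(1)] N(2) by simp
  then show ?thesis
    unfolding sf_neg_def[of L "proj l2 d Z"]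
    using the1_equality[OF sf_neg_ex1[OF large proj_zero_ne_one proj_in_line[of X]],
        of "proj l2 d (sf_neg L Z U X)"] proj_in_line by simp
qed

lemma proj_sf_sub:
  assumes "X \<in> line Z U" "Y \<in> line Z U"
  shows "proj l2 d (sf_sub L Z U X Y) = sf_sub L (proj l2 d Z) (proj l2 d U) (proj l2 d X) (proj l2 d Y)"
  unfolding sf_sub_def
  using proj_sf_add[OF assms(1) sf_neg_props(1)[OF large ZU assms(2)]] proj_sf_neg[OF assms(2)] by simp

lemma proj_sf_inv:
  assumes X: "X \<in> line Z U" "X \<noteq> Z"
  shows "proj l2 d (sf_inv L Z U X) = sf_inv L (proj l2 d Z) (proj l2 d U) (proj l2 d X)"
proof -
  note I = sf_inv_props[OF large ZU X]
  have "proj l2 d X \<noteq> proj l2 d Z" using proj_inj[OF X(1) line_props(2)[OF ZU]] X(2) by blast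
  moreover have "sf_mul L (proj l2 d Z) (proj l2 d U) (proj l2 d X) (proj l2 d (sf_inv L Z U X)) = proj l2 d U"
    using proj_sf_mul[OF X(1) I(1)] I(2) by simp
  ultimately show ?thesis
    unfolding sf_inv_def[of L "proj l2 d Z"]
    using the1_equality[OF sf_inv_ex1[OF large proj_zero_ne_one proj_in_line[of X]],
        of "proj l2 d (sf_inv L Z U X)"] proj_in_line by simp
qed

lemma proj_ratio:
  assumes A: "A \<in> line Z U" and B: "B \<in> line Z U" and C: "C \<in> line Z U" and BC: "B \<noteq> C"
  shows "proj l2 d (ratio L Z U A B C)
    = ratio L (proj l2 d Z) (proj l2 d U) (proj l2 d A) (proj l2 d B) (proj l2 d C)"
  unfolding ratio_def
  using proj_sf_mul[OF sf_inv_props(1)[OF large ZU sf_sub_props(1)[OF large ZU B C] sf_sub_props(2)[OF large ZU B C BC]]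
      sf_sub_props(1)[OF large ZU A C]]
    proj_sf_inv[OF sf_sub_props(1)[OF large ZU B C] sf_sub_props(2)[OF large ZU B C BC]]
    proj_sf_sub[OF B C] proj_sf_sub[OF A C]
  by simp

end

end

end

section \<open>Ratios on a line with two points\<close>

context affine_incidence
begin

context
  fixes Z U :: 'p
  assumes ZU: "Z \<noteq> U" and two_points: "\<And>X. X \<in> line Z U \<Longrightarrow> X = Z \<or> X = U"
begin

lemma sf_add_self: "X \<in> line Z U \<Longrightarrow> sf_add L Z U X X = Z"
proof -
  note l = line_props[OF ZU]
  have "sf_add L Z U U U \<noteq> U"
  proof
    assume "sf_add L Z U U U = U"
    then have "sf_add L Z U U U = sf_add L Z U U Z" using sf_add_zero_right[OF ZU l(3)] by simp
    then show False using sf_add_left_cancel[OF ZU l(3) l(3) l(2)] ZU by simp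
  qed
  then have "sf_add L Z U U U = Z" using two_points[OF sf_add_in[OF ZU l(3)]] by blast
  then show "X \<in> line Z U \<Longrightarrow> sf_add L Z U X X = Z"
    using two_points sf_add_zero_left[OF ZU l(2)] by blast
qed

lemma sf_neg_self: "X \<in> line Z U \<Longrightarrow> sf_neg L Z U X = X"
  unfolding sf_neg_def using sf_add_self sf_add_left_cancel[OF ZU] by (intro the_equality) auto

lemma sf_sub_two_points:
  "X \<in> line Z U \<Longrightarrow> Y \<in> line Z U \<Longrightarrow> sf_sub L Z U X Y = (if X = Y then Z else U)"
  unfolding sf_sub_def
  using sf_neg_self sf_add_self sf_add_zero_left[OF ZU] sf_add_zero_right[OF ZU] two_points ZU
  by (metis line_props(3)[OF ZU])

lemma sf_inv_one: "sf_inv L Z U U = U"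
  unfolding sf_inv_def
proof (rule the_equality)
  show "U \<in> line Z U \<and> sf_mul L Z U U U = U" using sf_mul_one_right[OF ZU] line_props(3)[OF ZU] by simp
  fix Y assume "Y \<in> line Z U \<and> sf_mul L Z U U Y = U"
  then show "Y = U" using two_points[of Y] sf_mul_zero_right[OF ZU, of U] ZU by auto
qed

lemma ratio_two_points:
  assumes "A \<in> line Z U" "B \<in> line Z U" "C \<in> line Z U" "B \<noteq> C"
  shows "ratio L Z U A B C = (if A = C then Z else U)"
  unfolding ratio_def
  using assms sf_sub_two_points sf_inv_one sf_mul_one_right[OF ZU] sf_mul_zero_right[OF ZU] line_props[OF ZU]
  by simp

end

lemma proj_ratio_two_line_cover:
  assumes cover: "two_line_cover" and ZU: "Z \<noteq> U" and l2: "l2 \<in> L" and d: "d \<in> L" "\<not> d \<parallel> l2"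
    and d1: "\<not> d \<parallel> line Z U"
    and A: "A \<in> line Z U" and B: "B \<in> line Z U" and C: "C \<in> line Z U" and BC: "B \<noteq> C"
  shows "proj l2 d (ratio L Z U A B C)
    = ratio L (proj l2 d Z) (proj l2 d U) (proj l2 d A) (proj l2 d B) (proj l2 d C)"
proof -
  let ?h = "proj l2 d"
  note l1 = line_props[OF ZU] and h = proj_props(1)[OF l2 d]
  have inj: "X = Y \<longleftrightarrow> ?h X = ?h Y" if "X \<in> line Z U" "Y \<in> line Z U" for X Y
    using proj_inj_on[OF l2 d l1(1) d1 that] by blast
  have ZU': "?h Z \<noteq> ?h U" using inj l1 ZU by blast
  note l1' = line_props[OF ZU']
  have "line (?h Z) (?h U) = l2" using line_eq[OF l2 h h ZU'] .
  then have "?h X \<in> line (?h Z) (?h U)" for X using h by simp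
  moreover have "X = Z \<or> X = U" if "X \<in> line Z U" for X
    using two_line_cover_two_points[OF cover l1(1) that l1(2,3)] ZU by blast
  moreover have "X = ?h Z \<or> X = ?h U" if "X \<in> line (?h Z) (?h U)" for X
    using two_line_cover_two_points[OF cover l1'(1) that l1'(2,3)] ZU' by blast
  ultimately show ?thesis
    using ratio_two_points[OF ZU _ A B C BC] ratio_two_points[OF ZU'] inj[OF A C] inj[OF B C] BC by simp
qed

end

context desarguesian
begin

lemma ratio_in_line:
  assumes ZU: "Z \<noteq> U" and A: "A \<in> line Z U" and B: "B \<in> line Z U" and C: "C \<in> line Z U" and BC: "B \<noteq> C"
  shows "ratio L Z U A B C \<in> line Z U"
proof (cases two_line_cover)
  case True
  then show ?thesis
    using ratio_two_points[OF ZU _ A B C BC] two_line_cover_two_points[OF True line_props(1)[OF ZU] _ line_props(2,3)[OF ZU]]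
      line_props(2,3)[OF ZU] ZU by auto
next
  case False
  show ?thesis unfolding ratio_def by (rule sf_mul_in[OF ZU sf_sub_props(1)[OF False ZU A C]])
qed

end

theorem mainTheorem12:
  fixes L :: "'p set set" and Z U A B C :: 'p and l2 :: "'p set" and f :: "'p \<Rightarrow> 'p"
  assumes "desargues_affine_plane L"
    and "Z \<noteq> U"
    and "l2 \<in> L"
    and "parallel_projection L (line_of L Z U) l2 f"
    and "A \<in> line_of L Z U" and "B \<in> line_of L Z U" and "C \<in> line_of L Z U"
    and "B \<noteq> C"
  shows "f (ratio L Z U A B C) = ratio L (f Z) (f U) (f A) (f B) (f C)"
proof -
  interpret desarguesian L
    using assms(1,2) unfolding desargues_affine_plane_def by unfold_locales auto
  obtain d where d: "d \<in> L" "\<not> d \<parallel> line Z U" "\<not> d \<parallel> l2"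
    and f: "\<And>X. X \<in> line Z U \<Longrightarrow> f X \<in> l2 \<and> f X \<in> parl X d"
    using assms(4) unfolding parallel_projection_def by blast
  have f_proj: "f X = proj l2 d X" if "X \<in> line Z U" for X
    by (rule proj_props(3)[OF assms(3) d(1,3), symmetric]) (use f[OF that] in simp_all)
  have "f (ratio L Z U A B C) = proj l2 d (ratio L Z U A B C)"
    using f_proj ratio_in_line assms(2,5-8) by simp
  also have "\<dots> = ratio L (proj l2 d Z) (proj l2 d U) (proj l2 d A) (proj l2 d B) (proj l2 d C)"
    using proj_ratio proj_ratio_two_line_cover assms(2,3,5-8) d by blast
  also have "\<dots> = ratio L (f Z) (f U) (f A) (f B) (f C)"
    using f_proj line_props(2,3)[OF assms(2)] assms(5-7) by simp
  finally show ?thesis .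
qed

end
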